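(* Let $(R,\mathfrak m,k)$ be a complete Noetherian local ring, $E=E_R(k)$, $L$ an $R$-module, and $S\subseteq L$ a subset. Then $\operatorname{tr}_{S,L}(R)=\operatorname{ann}_R\big(0_E^{\mathrm{cl}_{S,L}}\big)$.
   Context: For an $R$-module $N$, $\operatorname{tr}_{S,L}(N)$ is the submodule of $N$ generated by $\{f(s): f\in\operatorname{Hom}_R(L,N),\ s\in S\}$. For $R$-modules $N\subseteq M$, $N^{\mathrm{cl}_{S,L}}_M=\{u\in M: s\otimes u\in\operatorname{im}(L\otimes_R N\to L\otimes_R M)\text{ for all }s\in S\}$; in particular $0^{\mathrm{cl}_{S,L}}_E=\{u\in E: s\otimes u=0\text{ in }L\otimes_R E\text{ for all } s\in S\}$. *)

theory Defs
  imports "HOL-Algebra.Algebra"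
begin

primrec ideal_pow :: "('a, 'b) ring_scheme \<Rightarrow> 'a set \<Rightarrow> nat \<Rightarrow> 'a set" where
  "ideal_pow R I 0 = carrier R"
| "ideal_pow R I (Suc n) = ideal_prod R (ideal_pow R I n) I"

definition local_ring :: "('a, 'b) ring_scheme \<Rightarrow> 'a set \<Rightarrow> bool" where
  "local_ring R m \<longleftrightarrow> cring R \<and> maximalideal m R \<and> (\<forall>I. maximalideal I R \<longrightarrow> I = m)"

definition madic_complete :: "('a, 'b) ring_scheme \<Rightarrow> 'a set \<Rightarrow> bool" where
  "madic_complete R m \<longleftrightarrow>
     (\<forall>x :: nat \<Rightarrow> 'a. (\<forall>n. x n \<in> carrier R) \<and>
        (\<forall>k. \<exists>N. \<forall>n n'. N \<le> n \<and> N \<le> n' \<longrightarrow> x n \<ominus>\<^bsub>R\<^esub> x n' \<in> ideal_pow R m k)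
      \<longrightarrow> (\<exists>y \<in> carrier R. \<forall>k. \<exists>N. \<forall>n. N \<le> n \<longrightarrow> x n \<ominus>\<^bsub>R\<^esub> y \<in> ideal_pow R m k))"

definition lin_functionals :: "('a, 'b) ring_scheme \<Rightarrow> ('a, 'l) module \<Rightarrow> ('l \<Rightarrow> 'a) set" where
  "lin_functionals R L = {f. (\<forall>x \<in> carrier L. f x \<in> carrier R)
      \<and> (\<forall>x \<in> carrier L. \<forall>y \<in> carrier L. f (x \<oplus>\<^bsub>L\<^esub> y) = f x \<oplus>\<^bsub>R\<^esub> f y)
      \<and> (\<forall>r \<in> carrier R. \<forall>x \<in> carrier L. f (smult L r x) = r \<otimes>\<^bsub>R\<^esub> f x)}"

definition trace_ideal :: "('a, 'b) ring_scheme \<Rightarrow> 'l set \<Rightarrow> ('a, 'l) module \<Rightarrow> 'a set" where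
  "trace_ideal R S L = Idl\<^bsub>R\<^esub> {f s | f s. f \<in> lin_functionals R L \<and> s \<in> S}"

definition annihilator :: "('a, 'b) ring_scheme \<Rightarrow> ('a, 'e) module \<Rightarrow> 'e set \<Rightarrow> 'a set" where
  "annihilator R E U = {r \<in> carrier R. \<forall>u \<in> U. smult E r u = \<zero>\<^bsub>E\<^esub>}"

text \<open>Elements of the free R-module on carrier L \<times> carrier E are represented as
  (finitely supported) functions L \<times> E -> R; the basis element of a pair is fdelta.\<close>
definition fdelta :: "('a, 'b) ring_scheme \<Rightarrow> 'l \<times> 'e \<Rightarrow> ('l \<times> 'e \<Rightarrow> 'a)" where
  "fdelta R p = (\<lambda>q. if q = p then \<one>\<^bsub>R\<^esub> else \<zero>\<^bsub>R\<^esub>)"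

definition fadd :: "('a, 'b) ring_scheme \<Rightarrow> ('c \<Rightarrow> 'a) \<Rightarrow> ('c \<Rightarrow> 'a) \<Rightarrow> ('c \<Rightarrow> 'a)" where
  "fadd R f g = (\<lambda>q. f q \<oplus>\<^bsub>R\<^esub> g q)"

definition fsub :: "('a, 'b) ring_scheme \<Rightarrow> ('c \<Rightarrow> 'a) \<Rightarrow> ('c \<Rightarrow> 'a) \<Rightarrow> ('c \<Rightarrow> 'a)" where
  "fsub R f g = (\<lambda>q. f q \<ominus>\<^bsub>R\<^esub> g q)"

definition fsmult :: "('a, 'b) ring_scheme \<Rightarrow> 'a \<Rightarrow> ('c \<Rightarrow> 'a) \<Rightarrow> ('c \<Rightarrow> 'a)" where
  "fsmult R r f = (\<lambda>q. r \<otimes>\<^bsub>R\<^esub> f q)"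

text \<open>The submodule of bilinearity relations; L \<otimes>_R E is the free module modulo it.\<close>
inductive_set tensor_relations ::
  "('a, 'b) ring_scheme \<Rightarrow> ('a, 'l) module \<Rightarrow> ('a, 'e) module \<Rightarrow> ('l \<times> 'e \<Rightarrow> 'a) set"
  for R L E where
  zero: "(\<lambda>_. \<zero>\<^bsub>R\<^esub>) \<in> tensor_relations R L E"
| add_left: "\<lbrakk>x \<in> carrier L; y \<in> carrier L; u \<in> carrier E\<rbrakk> \<Longrightarrow>
     fsub R (fsub R (fdelta R (x \<oplus>\<^bsub>L\<^esub> y, u)) (fdelta R (x, u))) (fdelta R (y, u))
       \<in> tensor_relations R L E"
| add_right: "\<lbrakk>x \<in> carrier L; u \<in> carrier E; v \<in> carrier E\<rbrakk> \<Longrightarrow>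
     fsub R (fsub R (fdelta R (x, u \<oplus>\<^bsub>E\<^esub> v)) (fdelta R (x, u))) (fdelta R (x, v))
       \<in> tensor_relations R L E"
| smult_left: "\<lbrakk>r \<in> carrier R; x \<in> carrier L; u \<in> carrier E\<rbrakk> \<Longrightarrow>
     fsub R (fdelta R (smult L r x, u)) (fsmult R r (fdelta R (x, u))) \<in> tensor_relations R L E"
| smult_right: "\<lbrakk>r \<in> carrier R; x \<in> carrier L; u \<in> carrier E\<rbrakk> \<Longrightarrow>
     fsub R (fdelta R (x, smult E r u)) (fsmult R r (fdelta R (x, u))) \<in> tensor_relations R L E"
| sum: "\<lbrakk>f \<in> tensor_relations R L E; g \<in> tensor_relations R L E\<rbrakk> \<Longrightarrow>
     fadd R f g \<in> tensor_relations R L E"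
| scale: "\<lbrakk>r \<in> carrier R; f \<in> tensor_relations R L E\<rbrakk> \<Longrightarrow>
     fsmult R r f \<in> tensor_relations R L E"

definition tensor_zero ::
  "('a, 'b) ring_scheme \<Rightarrow> ('a, 'l) module \<Rightarrow> ('a, 'e) module \<Rightarrow> 'l \<Rightarrow> 'e \<Rightarrow> bool" where
  "tensor_zero R L E s u \<longleftrightarrow> fdelta R (s, u) \<in> tensor_relations R L E"

definition zero_closure ::
  "('a, 'b) ring_scheme \<Rightarrow> 'l set \<Rightarrow> ('a, 'l) module \<Rightarrow> ('a, 'e) module \<Rightarrow> 'e set" where
  "zero_closure R S L E = {u \<in> carrier E. \<forall>s \<in> S. tensor_zero R L E s u}"

text \<open>Injectivity, in the form of Baer's criterion: every R-linear map I -> E from an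
  ideal I of R extends to R, i.e. is given by multiplication by some element of E.\<close>
definition baer_injective :: "('a, 'b) ring_scheme \<Rightarrow> ('a, 'e) module \<Rightarrow> bool" where
  "baer_injective R E \<longleftrightarrow>
     (\<forall>I g. ideal I R \<and> (\<forall>x \<in> I. g x \<in> carrier E)
        \<and> (\<forall>x \<in> I. \<forall>y \<in> I. g (x \<oplus>\<^bsub>R\<^esub> y) = g x \<oplus>\<^bsub>E\<^esub> g y)
        \<and> (\<forall>r \<in> carrier R. \<forall>x \<in> I. g (r \<otimes>\<^bsub>R\<^esub> x) = smult E r (g x))
      \<longrightarrow> (\<exists>e \<in> carrier E. \<forall>x \<in> I. g x = smult E x e))"

text \<open>E is (isomorphic to) E_R(k): an injective module which is an essential extension of
  a submodule R e0 \<cong> R/m = k (ann e0 = m).\<close>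
definition is_injective_hull_residue_field ::
  "('a, 'b) ring_scheme \<Rightarrow> 'a set \<Rightarrow> ('a, 'e) module \<Rightarrow> bool" where
  "is_injective_hull_residue_field R m E \<longleftrightarrow>
     module R E \<and> baer_injective R E \<and>
     (\<exists>e0 \<in> carrier E. annihilator R E {e0} = m \<and>
        (\<forall>N. submodule N R E \<and> N \<noteq> {\<zero>\<^bsub>E\<^esub>} \<longrightarrow>
             (\<exists>r \<in> carrier R. smult E r e0 \<in> N \<and> smult E r e0 \<noteq> \<zero>\<^bsub>E\<^esub>)))"

end

theory Submission
  imports Defs
begin

text \<open>Because E = E_R(k) is an injective cogenerator, every ideal J is the annihilator of
  (0 :_E J) (Matlis' double annihilator). It therefore suffices to show 0^cl_E = (0 :_E tr),
  i.e. that s \<otimes> u = 0 in L \<otimes> E iff f(s) u = 0 for all f \<in> Hom_R(L, R). One direction is the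
  universal property of the tensor product applied to the bilinear map (x, u) \<mapsto> f(x) u.
  Conversely, if s \<otimes> u \<noteq> 0, injectivity of E gives h : L \<otimes> E \<rightarrow> E with h(s \<otimes> u) = e0, the
  generator of the socle k. Completeness of R makes Hom_R(E, E) = R, so each slice
  v \<mapsto> h(y \<otimes> v) is multiplication by some g(y), and g : L \<rightarrow> R is linear with g(s) u = e0 \<noteq> 0.
  Hom_R(E, E) = R is shown layer by layer: on each (0 :_E m^n) every endomorphism is a scalar,
  by Noetherian induction over m-primary ideals, and these scalars form an m-adic Cauchy
  sequence.\<close>

lemma (in noetherian_ring) ideal_family_maximal:
  assumes "F \<noteq> {}" "F \<subseteq> {I. ideal I R}"
  shows "\<exists>M\<in>F. \<forall>J\<in>F. M \<subseteq> J \<longrightarrow> J = M"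
proof (rule subset_Zorn)
  fix C assume C: "subset.chain F C"
  show "\<exists>U\<in>F. \<forall>K\<in>C. K \<subseteq> U"
  proof (cases "C = {}")
    case True
    then show ?thesis using assms(1) by blast
  next
    case False
    have "C \<subseteq> F" using C by (simp add: pred_on.chain_def)
    then have "subset.chain {I. ideal I R} C"
      using C assms(2) by (simp add: pred_on.chain_def subset_iff)
    then have "\<Union>C \<in> C" using ideal_chain_is_trivial False by blast
    then show ?thesis using \<open>C \<subseteq> F\<close> by blast
  qed
qed

lemma (in noetherian_ring) ascending_chain_stabilizes:
  assumes "\<And>i. ideal (A i) R" "\<And>i. A i \<subseteq> A (Suc i)"
  shows "\<exists>k. A (Suc k) = A k"
proof -
  have "\<exists>K\<in>range A. \<forall>J\<in>range A. K \<subseteq> J \<longrightarrow> J = K"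
    by (rule ideal_family_maximal) (use assms(1) in auto)
  then obtain k where "\<forall>J\<in>range A. A k \<subseteq> J \<longrightarrow> J = A k" by blast
  then have "A (Suc k) = A k" using assms(2)[of k] by blast
  then show ?thesis ..
qed

lemma (in cring) ideal_closedI:
  assumes "I \<subseteq> carrier R" "\<zero> \<in> I" "\<And>a b. a \<in> I \<Longrightarrow> b \<in> I \<Longrightarrow> a \<oplus> b \<in> I"
    "\<And>a x. a \<in> I \<Longrightarrow> x \<in> carrier R \<Longrightarrow> x \<otimes> a \<in> I"
  shows "ideal I R"
proof (rule idealI)
  show "subgroup I (add_monoid R)"
  proof (rule subgroup.intro)
    fix x assume x: "x \<in> I"
    then have "(\<ominus> \<one>) \<otimes> x \<in> I" using assms(4) by simp
    then show "inv\<^bsub>add_monoid R\<^esub> x \<in> I"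
      using x assms(1) l_minus[of \<one> x] by (auto simp: a_inv_def)
  qed (use assms in auto)
  fix a x assume "a \<in> I" "x \<in> carrier R"
  then show "x \<otimes> a \<in> I" "a \<otimes> x \<in> I" using assms(1,4) m_comm by (auto simp: subset_iff)
qed (rule ring_axioms)

lemma (in module) submodule_closedI:
  assumes "H \<subseteq> carrier M" "\<zero>\<^bsub>M\<^esub> \<in> H" "\<And>a b. a \<in> H \<Longrightarrow> b \<in> H \<Longrightarrow> a \<oplus>\<^bsub>M\<^esub> b \<in> H"
    "\<And>a x. a \<in> carrier R \<Longrightarrow> x \<in> H \<Longrightarrow> a \<odot>\<^bsub>M\<^esub> x \<in> H"
  shows "submodule H R M"
proof (rule submoduleI)
  fix a assume a: "a \<in> H"
  then have "(\<ominus> \<one>) \<odot>\<^bsub>M\<^esub> a \<in> H" using assms(4) by simp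
  then show "\<ominus>\<^bsub>M\<^esub> a \<in> H" using a assms(1) smult_l_minus[of \<one> a] by (simp add: subset_iff)
qed (use assms in auto)

lemma (in abelian_group) minus_eq_zero_iff:
  assumes "a \<in> carrier G" "b \<in> carrier G"
  shows "a \<ominus> b = \<zero> \<longleftrightarrow> a = b"
  using assms by (metis a_minus_def add.inv_closed minus_equality r_neg)

lemma (in abelian_group) add_minus_minus_cancel:
  assumes "a \<in> carrier G" "b \<in> carrier G" shows "a \<oplus> b \<ominus> a \<ominus> b = \<zero>"
proof -
  have "b \<oplus> (\<ominus> a \<oplus> \<ominus> b) = \<ominus> a" using assms by (simp add: a_lcomm[of b] r_neg)
  then show ?thesis using assms by (simp add: minus_eq a_assoc r_neg)
qed

lemma (in module) smult_commute:
  assumes "a \<in> carrier R" "b \<in> carrier R" "u \<in> carrier M"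
  shows "a \<odot>\<^bsub>M\<^esub> (b \<odot>\<^bsub>M\<^esub> u) = b \<odot>\<^bsub>M\<^esub> (a \<odot>\<^bsub>M\<^esub> u)"
  using assms by (simp add: smult_assoc1[symmetric] m_comm)

lemma (in module) smult_minus_eq_zero_iff:
  assumes "a \<in> carrier R" "b \<in> carrier R" "x \<in> carrier M"
  shows "(a \<ominus> b) \<odot>\<^bsub>M\<^esub> x = \<zero>\<^bsub>M\<^esub> \<longleftrightarrow> a \<odot>\<^bsub>M\<^esub> x = b \<odot>\<^bsub>M\<^esub> x"
proof -
  have "(a \<ominus> b) \<odot>\<^bsub>M\<^esub> x = a \<odot>\<^bsub>M\<^esub> x \<ominus>\<^bsub>M\<^esub> b \<odot>\<^bsub>M\<^esub> x"
    using assms by (simp add: R.minus_eq M.minus_eq smult_l_distr smult_l_minus)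
  then show ?thesis using assms by (simp add: M.minus_eq_zero_iff)
qed

lemma ideal_pow_ideal: "cring R \<Longrightarrow> ideal I R \<Longrightarrow> ideal (ideal_pow R I n) R"
proof (induction n)
  case 0 then show ?case by (simp add: cring.axioms(1) ring.oneideal)
next
  case (Suc n) then show ?case by (simp add: cring.axioms(1) ring.ideal_prod_is_ideal)
qed

lemma ideal_pow_antimono:
  assumes "cring R" "ideal I R" "k \<le> n"
  shows "ideal_pow R I n \<subseteq> ideal_pow R I k"
  using assms(3)
proof (induction n)
  case (Suc n)
  have "ideal_pow R I (Suc n) \<subseteq> ideal_pow R I n"
    using ring.ideal_prod_inter[OF cring.axioms(1)[OF assms(1)] ideal_pow_ideal[OF assms(1,2)] assms(2)]
    by simp
  then show ?case using Suc by (cases "k = Suc n") auto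
qed simp

definition ideal_colon :: "('a, 'b) ring_scheme \<Rightarrow> 'a set \<Rightarrow> 'a set \<Rightarrow> 'a set" where
  "ideal_colon R I J = {c \<in> carrier R. \<forall>a\<in>J. c \<otimes>\<^bsub>R\<^esub> a \<in> I}"

lemma (in cring) ideal_colon_ideal:
  assumes I: "ideal I R" and J: "J \<subseteq> carrier R"
  shows "ideal (ideal_colon R I J) R"
proof (rule ideal_closedI)
  have "c \<in> carrier R" if "c \<in> J" for c using that J by blast
  then show "\<zero> \<in> ideal_colon R I J"
    unfolding ideal_colon_def using additive_subgroup.zero_closed[OF ideal.axioms(1)[OF I]] by auto
  fix a b assume "a \<in> ideal_colon R I J" "b \<in> ideal_colon R I J"
  then show "a \<oplus> b \<in> ideal_colon R I J"
    unfolding ideal_colon_def using J additive_subgroup.a_closed[OF ideal.axioms(1)[OF I]]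
    by (auto simp: l_distr subset_iff)
next
  fix a x assume "a \<in> ideal_colon R I J" "x \<in> carrier R"
  then show "x \<otimes> a \<in> ideal_colon R I J"
    unfolding ideal_colon_def using J ideal.I_l_closed[OF I] by (auto simp: m_assoc subset_iff)
qed (auto simp: ideal_colon_def)

lemma (in cring) ideal_colon_one:
  "ideal I R \<Longrightarrow> z \<in> carrier R \<Longrightarrow> \<one> \<in> ideal_colon R I {z} \<longleftrightarrow> z \<in> I"
  by (auto simp: ideal_colon_def ideal.Icarr)

text \<open>A colon ideal (Q : z) maximal among those with z \<notin> Q is prime (an associated prime of R/Q).\<close>
lemma (in cring) exists_prime_colon:
  assumes noeth: "noetherian_ring R" and Q: "ideal Q R" "\<one> \<notin> Q"
  shows "\<exists>z\<in>carrier R - Q. primeideal (ideal_colon R Q {z}) R"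
proof -
  let ?col = "\<lambda>z. ideal_colon R Q {z}"
  have col_ideal: "ideal (?col z) R" if "z \<in> carrier R" for z
    using ideal_colon_ideal[OF Q(1)] that by simp
  define G where "G = ?col ` (carrier R - Q)"
  have "G \<noteq> {}" using Q(2) unfolding G_def by blast
  moreover have "G \<subseteq> {I. ideal I R}" by (simp add: G_def image_subset_iff col_ideal)
  ultimately have "\<exists>P\<in>G. \<forall>J\<in>G. P \<subseteq> J \<longrightarrow> J = P"
    by (rule noetherian_ring.ideal_family_maximal[OF noeth])
  then obtain P where P: "P \<in> G" and Pmax: "\<And>J. J \<in> G \<Longrightarrow> P \<subseteq> J \<Longrightarrow> J = P"
    by blast
  obtain z where z: "z \<in> carrier R" "z \<notin> Q" and Pz: "P = ?col z" using P unfolding G_def by blast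
  have "primeideal P R"
  proof (rule primeidealI[OF _ is_cring])
    show "ideal P R" using Pz col_ideal z(1) by simp
    have "\<one> \<notin> P" using Pz ideal_colon_one[OF Q(1) z(1)] z(2) by simp
    then show "carrier R \<noteq> P" by auto
    fix a b assume ab: "a \<in> carrier R" "b \<in> carrier R" "a \<otimes> b \<in> P"
    show "a \<in> P \<or> b \<in> P"
    proof (rule disjCI)
      assume b: "b \<notin> P"
      have "b \<otimes> z \<notin> Q" using ab(2) b z(1) Pz by (simp add: ideal_colon_def m_comm)
      then have "?col (b \<otimes> z) \<in> G" using ab(2) z(1) unfolding G_def by simp
      moreover have "P \<subseteq> ?col (b \<otimes> z)"
      proof
        fix c assume "c \<in> P"
        then have c: "c \<in> carrier R" "c \<otimes> z \<in> Q" using Pz by (auto simp: ideal_colon_def)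
        then have "b \<otimes> (c \<otimes> z) \<in> Q" using ideal.I_l_closed[OF Q(1)] ab(2) by blast
        then show "c \<in> ?col (b \<otimes> z)" using c ab(2) z(1) by (simp add: ideal_colon_def m_lcomm)
      qed
      ultimately have "?col (b \<otimes> z) = P" using Pmax by blast
      moreover have "a \<in> ?col (b \<otimes> z)" using ab z(1) Pz by (simp add: ideal_colon_def m_assoc)
      ultimately show "a \<in> P" by simp
    qed
  qed
  then show ?thesis using z Pz by blast
qed

lemma (in cring) ideal_colon_self:
  assumes "ideal I R" "z \<in> carrier R" shows "I \<subseteq> ideal_colon R I {z}"
  using assms ideal.Icarr[OF assms(1)] ideal.I_r_closed[OF assms(1)] unfolding ideal_colon_def by blast

lemma (in cring) ideal_colon_ideal_pow_Suc:
  assumes I: "ideal I R" and J: "ideal J R" and z: "z \<in> carrier R"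
    and zJ: "\<And>j. j \<in> J \<Longrightarrow> j \<otimes> z \<in> ideal_colon R I (ideal_pow R J k)"
  shows "z \<in> ideal_colon R I (ideal_pow R J (Suc k))"
proof -
  have "z \<otimes> a \<in> I" if "a \<in> ideal_prod R (ideal_pow R J k) J" for a
    using that
  proof (induction a rule: ideal_prod.induct)
    case (prod i j)
    have "i \<in> carrier R" "j \<in> carrier R"
      using prod ideal.Icarr[OF ideal_pow_ideal[OF is_cring J]] ideal.Icarr[OF J] by auto
    moreover have "(j \<otimes> z) \<otimes> i \<in> I" using zJ[OF prod(2)] prod(1) unfolding ideal_colon_def by blast
    ultimately show ?case using z by (simp add: m_ac)
  next
    case (sum s1 s2)
    have "s1 \<in> carrier R" "s2 \<in> carrier R"
      using sum(1,2) ideal_prod_in_carrier[OF ideal_pow_ideal[OF is_cring J] J] by blast+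
    then show ?case
      using sum(3,4) z additive_subgroup.a_closed[OF ideal.axioms(1)[OF I]] by (simp add: r_distr)
  qed
  then show ?thesis using z unfolding ideal_colon_def by simp
qed

lemma (in primeideal) nat_pow_mem_imp_mem:
  assumes "a \<in> carrier R" "a [^] (n::nat) \<in> I" shows "a \<in> I"
  using assms(2)
proof (induction n)
  case 0
  then show ?case using I_notcarr one_imp_carrier by simp
next
  case (Suc n)
  then show ?case using I_prime[of "a [^] n" a] assms(1) by auto
qed

lemma (in cring) nonunit_in_maximalideal:
  assumes noeth: "noetherian_ring R" and a: "a \<in> carrier R" "a \<notin> Units R"
  shows "\<exists>M. maximalideal M R \<and> a \<in> M"
proof -
  let ?F = "{K. ideal K R \<and> a \<in> K \<and> \<one> \<notin> K}"
  have "\<one> \<notin> PIdl a"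
  proof
    assume "\<one> \<in> PIdl a"
    then obtain x where "x \<in> carrier R" "\<one> = x \<otimes> a" unfolding cgenideal_def by blast
    then show False using a by (auto simp: Units_def m_comm)
  qed
  then have "PIdl a \<in> ?F" using cgenideal_ideal[OF a(1)] cgenideal_self[OF a(1)] by simp
  then obtain K where K: "K \<in> ?F" and Kmax: "\<And>J. J \<in> ?F \<Longrightarrow> K \<subseteq> J \<Longrightarrow> J = K"
    using noetherian_ring.ideal_family_maximal[OF noeth, of ?F] by blast
  have "maximalideal K R"
  proof (rule maximalidealI)
    show "ideal K R" "carrier R \<noteq> K" using K by auto
    fix J assume J: "ideal J R" "K \<subseteq> J" "J \<subseteq> carrier R"
    then show "J = K \<or> J = carrier R"
      using Kmax[of J] K ideal.one_imp_carrier[OF J(1)] by blast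
  qed
  then show ?thesis using K by (intro exI[of _ K]) simp
qed

section \<open>Linear maps and Baer's criterion\<close>

definition linear_on ::
  "('a, 'b) ring_scheme \<Rightarrow> ('a, 'v, 'c) module_scheme \<Rightarrow> ('a, 'w, 'd) module_scheme \<Rightarrow>
    'v set \<Rightarrow> ('v \<Rightarrow> 'w) \<Rightarrow> bool" where
  "linear_on R V W U h \<longleftrightarrow> (\<forall>x\<in>U. h x \<in> carrier W)
     \<and> (\<forall>x\<in>U. \<forall>y\<in>U. h (x \<oplus>\<^bsub>V\<^esub> y) = h x \<oplus>\<^bsub>W\<^esub> h y)
     \<and> (\<forall>r\<in>carrier R. \<forall>x\<in>U. h (r \<odot>\<^bsub>V\<^esub> x) = r \<odot>\<^bsub>W\<^esub> h x)"

lemma linear_onD: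
  assumes "linear_on R V W U h"
  shows linear_on_closed: "x \<in> U \<Longrightarrow> h x \<in> carrier W"
    and linear_on_add: "x \<in> U \<Longrightarrow> y \<in> U \<Longrightarrow> h (x \<oplus>\<^bsub>V\<^esub> y) = h x \<oplus>\<^bsub>W\<^esub> h y"
    and linear_on_smult: "r \<in> carrier R \<Longrightarrow> x \<in> U \<Longrightarrow> h (r \<odot>\<^bsub>V\<^esub> x) = r \<odot>\<^bsub>W\<^esub> h x"
  using assms unfolding linear_on_def by blast+

lemma linear_on_subset: "linear_on R V W U h \<Longrightarrow> U' \<subseteq> U \<Longrightarrow> linear_on R V W U' h"
  unfolding linear_on_def by blast

lemma (in module) linear_on_minus:
  assumes V: "module R V" and h: "linear_on R V M (carrier V) h"
    and x: "x \<in> carrier V" and y: "y \<in> carrier V"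
  shows "h (x \<ominus>\<^bsub>V\<^esub> y) = h x \<ominus>\<^bsub>M\<^esub> h y"
proof -
  interpret V: module R V by (rule V)
  have "x \<ominus>\<^bsub>V\<^esub> y = x \<oplus>\<^bsub>V\<^esub> (\<ominus> \<one>) \<odot>\<^bsub>V\<^esub> y"
    using y by (simp add: V.M.minus_eq V.smult_l_minus)
  then have "h (x \<ominus>\<^bsub>V\<^esub> y) = h x \<oplus>\<^bsub>M\<^esub> (\<ominus> \<one>) \<odot>\<^bsub>M\<^esub> h y"
    using h x y unfolding linear_on_def by simp
  then show ?thesis using h y unfolding linear_on_def by (simp add: M.minus_eq smult_l_minus)
qed

lemma (in module) linear_on_minus_smult:
  assumes \<psi>: "linear_on R M M U \<psi>" and U: "U \<subseteq> carrier M" and a: "a \<in> carrier R"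
  shows "linear_on R M M U (\<lambda>u. \<psi> u \<ominus>\<^bsub>M\<^esub> a \<odot>\<^bsub>M\<^esub> u)"
  unfolding linear_on_def
proof (intro conjI ballI)
  fix u assume u: "u \<in> U"
  then show "\<psi> u \<ominus>\<^bsub>M\<^esub> a \<odot>\<^bsub>M\<^esub> u \<in> carrier M" using linear_on_closed[OF \<psi>] U a by auto
  fix v assume v: "v \<in> U"
  show "\<psi> (u \<oplus>\<^bsub>M\<^esub> v) \<ominus>\<^bsub>M\<^esub> a \<odot>\<^bsub>M\<^esub> (u \<oplus>\<^bsub>M\<^esub> v)
      = (\<psi> u \<ominus>\<^bsub>M\<^esub> a \<odot>\<^bsub>M\<^esub> u) \<oplus>\<^bsub>M\<^esub> (\<psi> v \<ominus>\<^bsub>M\<^esub> a \<odot>\<^bsub>M\<^esub> v)"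
    using linear_on_add[OF \<psi> u v] linear_on_closed[OF \<psi>] u v U a
    by (simp add: smult_r_distr M.minus_eq M.minus_add M.a_ac subset_iff)
next
  fix r u assume r: "r \<in> carrier R" and u: "u \<in> U"
  show "\<psi> (r \<odot>\<^bsub>M\<^esub> u) \<ominus>\<^bsub>M\<^esub> a \<odot>\<^bsub>M\<^esub> (r \<odot>\<^bsub>M\<^esub> u) = r \<odot>\<^bsub>M\<^esub> (\<psi> u \<ominus>\<^bsub>M\<^esub> a \<odot>\<^bsub>M\<^esub> u)"
    using linear_on_smult[OF \<psi> r u] linear_on_closed[OF \<psi> u] u U a r
    by (simp add: M.minus_eq smult_r_distr smult_r_minus smult_commute[of a r] subset_iff)
qed

text \<open>Graphs of R-linear maps from submodules of V to W; the last clause makes the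
  relation single-valued.\<close>
definition linear_graph ::
  "('a, 'b) ring_scheme \<Rightarrow> ('a, 'v, 'c) module_scheme \<Rightarrow> ('a, 'w, 'd) module_scheme \<Rightarrow>
    ('v \<times> 'w) set \<Rightarrow> bool" where
  "linear_graph R V W G \<longleftrightarrow> G \<subseteq> carrier V \<times> carrier W \<and> (\<zero>\<^bsub>V\<^esub>, \<zero>\<^bsub>W\<^esub>) \<in> G
     \<and> (\<forall>a v b w. (a, v) \<in> G \<longrightarrow> (b, w) \<in> G \<longrightarrow> (a \<oplus>\<^bsub>V\<^esub> b, v \<oplus>\<^bsub>W\<^esub> w) \<in> G)
     \<and> (\<forall>r a v. r \<in> carrier R \<longrightarrow> (a, v) \<in> G \<longrightarrow> (r \<odot>\<^bsub>V\<^esub> a, r \<odot>\<^bsub>W\<^esub> v) \<in> G)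
     \<and> (\<forall>v. (\<zero>\<^bsub>V\<^esub>, v) \<in> G \<longrightarrow> v = \<zero>\<^bsub>W\<^esub>)"

lemma (in module) linear_graph_single_valued:
  assumes V: "module R V" and G: "linear_graph R V M G" and "(a, v) \<in> G" "(a, w) \<in> G"
  shows "v = w"
proof -
  interpret V: module R V by (rule V)
  have a: "a \<in> carrier V" and v: "v \<in> carrier M" and w: "w \<in> carrier M"
    using G assms(3,4) unfolding linear_graph_def by auto
  have "((\<ominus> \<one>) \<odot>\<^bsub>V\<^esub> a, (\<ominus> \<one>) \<odot>\<^bsub>M\<^esub> w) \<in> G"
    using G assms(4) unfolding linear_graph_def by simp
  then have "(a \<oplus>\<^bsub>V\<^esub> (\<ominus> \<one>) \<odot>\<^bsub>V\<^esub> a, v \<oplus>\<^bsub>M\<^esub> (\<ominus> \<one>) \<odot>\<^bsub>M\<^esub> w) \<in> G"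
    using G assms(3) unfolding linear_graph_def by blast
  then have "(\<zero>\<^bsub>V\<^esub>, v \<ominus>\<^bsub>M\<^esub> w) \<in> G"
    using a w by (simp add: V.smult_l_minus smult_l_minus V.M.r_neg M.minus_eq)
  then have "v \<ominus>\<^bsub>M\<^esub> w = \<zero>\<^bsub>M\<^esub>" using G unfolding linear_graph_def by blast
  then show ?thesis using v w by (simp add: M.minus_eq_zero_iff)
qed

lemma (in module) linear_graph_zero_on_submodule:
  assumes V: "module R V" and K: "submodule K R V"
  shows "linear_graph R V M (K \<times> {\<zero>\<^bsub>M\<^esub>})"
proof -
  interpret V: module R V by (rule V)
  show ?thesis
    using V.submoduleE[OF K] submodule.axioms(1)[OF K] subgroup.one_closed
    unfolding linear_graph_def by fastforce
qed

lemma linear_graph_chain_Union: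
  assumes "C \<noteq> {}" and C: "subset.chain {G. linear_graph R V W G} C"
  shows "linear_graph R V W (\<Union>C)"
proof -
  have mem: "\<And>G. G \<in> C \<Longrightarrow> linear_graph R V W G"
    and cmp: "\<And>G1 G2. G1 \<in> C \<Longrightarrow> G2 \<in> C \<Longrightarrow> G1 \<subseteq> G2 \<or> G2 \<subseteq> G1"
    using C unfolding pred_on.chain_def by blast+
  obtain G0 where G0: "G0 \<in> C" using assms(1) by blast
  show ?thesis unfolding linear_graph_def
  proof (intro conjI allI impI)
    show "\<Union>C \<subseteq> carrier V \<times> carrier W" using mem unfolding linear_graph_def by blast
    show "(\<zero>\<^bsub>V\<^esub>, \<zero>\<^bsub>W\<^esub>) \<in> \<Union>C" using mem[OF G0] G0 unfolding linear_graph_def by blast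
  next
    fix a v b w assume "(a, v) \<in> \<Union>C" "(b, w) \<in> \<Union>C"
    then obtain G1 G2 where G1: "G1 \<in> C" "(a, v) \<in> G1" and G2: "G2 \<in> C" "(b, w) \<in> G2" by blast
    then obtain G where "G \<in> C" "(a, v) \<in> G" "(b, w) \<in> G" using cmp[OF G1(1) G2(1)] by blast
    then show "(a \<oplus>\<^bsub>V\<^esub> b, v \<oplus>\<^bsub>W\<^esub> w) \<in> \<Union>C" using mem unfolding linear_graph_def by blast
  next
    fix r a v assume "r \<in> carrier R" "(a, v) \<in> \<Union>C"
    then show "(r \<odot>\<^bsub>V\<^esub> a, r \<odot>\<^bsub>W\<^esub> v) \<in> \<Union>C" using mem unfolding linear_graph_def by blast
  next
    fix v assume "(\<zero>\<^bsub>V\<^esub>, v) \<in> \<Union>C"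
    then show "v = \<zero>\<^bsub>W\<^esub>" using mem unfolding linear_graph_def by blast
  qed
qed

lemma linear_graph_maximal_extension:
  assumes "linear_graph R V W G0"
  obtains G where "linear_graph R V W G" "G0 \<subseteq> G"
    "\<And>G'. linear_graph R V W G' \<Longrightarrow> G \<subseteq> G' \<Longrightarrow> G' = G"
proof -
  define T where "T = {G. linear_graph R V W G \<and> G0 \<subseteq> G}"
  have "\<exists>G\<in>T. \<forall>G'\<in>T. G \<subseteq> G' \<longrightarrow> G' = G"
  proof (rule subset_Zorn)
    fix C assume C: "subset.chain T C"
    show "\<exists>U\<in>T. \<forall>G\<in>C. G \<subseteq> U"
    proof (cases "C = {}")
      case True
      then show ?thesis using assms unfolding T_def by blast
    next
      case False
      have "C \<subseteq> T" using C by (simp add: pred_on.chain_def)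
      then have "subset.chain {G. linear_graph R V W G} C" using C unfolding pred_on.chain_def T_def by blast
      then have "\<Union>C \<in> T" using linear_graph_chain_Union[OF False] False \<open>C \<subseteq> T\<close> unfolding T_def by blast
      then show ?thesis by blast
    qed
  qed
  then obtain G where G: "G \<in> T" and Gmax: "\<And>G'. G' \<in> T \<Longrightarrow> G \<subseteq> G' \<Longrightarrow> G' = G"
    by blast
  show ?thesis by (rule that[of G]) (use G Gmax in \<open>auto simp: T_def\<close>)
qed

definition graph_adjoin ::
  "('a, 'b) ring_scheme \<Rightarrow> ('a, 'v, 'c) module_scheme \<Rightarrow> ('a, 'w, 'd) module_scheme \<Rightarrow>
    ('v \<times> 'w) set \<Rightarrow> 'v \<Rightarrow> 'w \<Rightarrow> ('v \<times> 'w) set"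
  where "graph_adjoin R V W G x e =
    {(a \<oplus>\<^bsub>V\<^esub> c \<odot>\<^bsub>V\<^esub> x, v \<oplus>\<^bsub>W\<^esub> c \<odot>\<^bsub>W\<^esub> e) | a v c. (a, v) \<in> G \<and> c \<in> carrier R}"

lemma (in module) graph_adjoin_extends:
  assumes V: "module R V" and G: "linear_graph R V M G" and x: "x \<in> carrier V" and e: "e \<in> carrier M"
  shows "G \<subseteq> graph_adjoin R V M G x e" and "(x, e) \<in> graph_adjoin R V M G x e"
proof -
  interpret V: module R V by (rule V)
  have G_car: "G \<subseteq> carrier V \<times> carrier M" and G0: "(\<zero>\<^bsub>V\<^esub>, \<zero>\<^bsub>M\<^esub>) \<in> G"
    using G unfolding linear_graph_def by blast+
  show "G \<subseteq> graph_adjoin R V M G x e"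
  proof
    fix p assume p: "p \<in> G"
    then obtain a v where "p = (a, v)" "(a, v) \<in> G" by (cases p) auto
    moreover have "a \<oplus>\<^bsub>V\<^esub> \<zero> \<odot>\<^bsub>V\<^esub> x = a" "v \<oplus>\<^bsub>M\<^esub> \<zero> \<odot>\<^bsub>M\<^esub> e = v"
      using calculation G_car x e by auto
    ultimately show "p \<in> graph_adjoin R V M G x e" unfolding graph_adjoin_def by force
  qed
  have "(\<zero>\<^bsub>V\<^esub> \<oplus>\<^bsub>V\<^esub> \<one> \<odot>\<^bsub>V\<^esub> x, \<zero>\<^bsub>M\<^esub> \<oplus>\<^bsub>M\<^esub> \<one> \<odot>\<^bsub>M\<^esub> e) \<in> graph_adjoin R V M G x e"
    unfolding graph_adjoin_def using G0 by blast
  then show "(x, e) \<in> graph_adjoin R V M G x e" using x e by simp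
qed

lemma (in module) linear_graph_adjoin:
  assumes V: "module R V" and G: "linear_graph R V M G" and x: "x \<in> carrier V" and e: "e \<in> carrier M"
    and compat: "\<And>c v. c \<in> carrier R \<Longrightarrow> (c \<odot>\<^bsub>V\<^esub> x, v) \<in> G \<Longrightarrow> v = c \<odot>\<^bsub>M\<^esub> e"
  shows "linear_graph R V M (graph_adjoin R V M G x e)"
proof -
  interpret V: module R V by (rule V)
  have GV: "\<And>a v. (a, v) \<in> G \<Longrightarrow> a \<in> carrier V" and GM: "\<And>a v. (a, v) \<in> G \<Longrightarrow> v \<in> carrier M"
    and Gadd: "\<And>a v b w. (a, v) \<in> G \<Longrightarrow> (b, w) \<in> G \<Longrightarrow> (a \<oplus>\<^bsub>V\<^esub> b, v \<oplus>\<^bsub>M\<^esub> w) \<in> G"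
    and Gsmult: "\<And>r a v. r \<in> carrier R \<Longrightarrow> (a, v) \<in> G \<Longrightarrow> (r \<odot>\<^bsub>V\<^esub> a, r \<odot>\<^bsub>M\<^esub> v) \<in> G"
    using G unfolding linear_graph_def by blast+
  let ?G' = "graph_adjoin R V M G x e"
  show ?thesis unfolding linear_graph_def
  proof (intro conjI allI impI)
    show "?G' \<subseteq> carrier V \<times> carrier M" unfolding graph_adjoin_def using GV GM x e by auto
    show "(\<zero>\<^bsub>V\<^esub>, \<zero>\<^bsub>M\<^esub>) \<in> ?G'" using graph_adjoin_extends[OF V G x e] G unfolding linear_graph_def by blast
  next
    fix a v b w assume "(a, v) \<in> ?G'" "(b, w) \<in> ?G'"
    then obtain a1 v1 c1 a2 v2 c2
      where 1: "(a1, v1) \<in> G" "c1 \<in> carrier R" "a = a1 \<oplus>\<^bsub>V\<^esub> c1 \<odot>\<^bsub>V\<^esub> x" "v = v1 \<oplus>\<^bsub>M\<^esub> c1 \<odot>\<^bsub>M\<^esub> e"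
        and 2: "(a2, v2) \<in> G" "c2 \<in> carrier R" "b = a2 \<oplus>\<^bsub>V\<^esub> c2 \<odot>\<^bsub>V\<^esub> x" "w = v2 \<oplus>\<^bsub>M\<^esub> c2 \<odot>\<^bsub>M\<^esub> e"
      unfolding graph_adjoin_def by blast
    have "a \<oplus>\<^bsub>V\<^esub> b = (a1 \<oplus>\<^bsub>V\<^esub> a2) \<oplus>\<^bsub>V\<^esub> (c1 \<oplus> c2) \<odot>\<^bsub>V\<^esub> x"
      using 1 2 GV x by (simp add: V.smult_l_distr V.M.a_ac)
    moreover have "v \<oplus>\<^bsub>M\<^esub> w = (v1 \<oplus>\<^bsub>M\<^esub> v2) \<oplus>\<^bsub>M\<^esub> (c1 \<oplus> c2) \<odot>\<^bsub>M\<^esub> e"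
      using 1 2 GM e by (simp add: smult_l_distr M.a_ac)
    ultimately show "(a \<oplus>\<^bsub>V\<^esub> b, v \<oplus>\<^bsub>M\<^esub> w) \<in> ?G'"
      using Gadd[OF 1(1) 2(1)] 1(2) 2(2) unfolding graph_adjoin_def by blast
  next
    fix r a v assume r: "r \<in> carrier R" and "(a, v) \<in> ?G'"
    then obtain a1 v1 c1
      where 1: "(a1, v1) \<in> G" "c1 \<in> carrier R" "a = a1 \<oplus>\<^bsub>V\<^esub> c1 \<odot>\<^bsub>V\<^esub> x" "v = v1 \<oplus>\<^bsub>M\<^esub> c1 \<odot>\<^bsub>M\<^esub> e"
      unfolding graph_adjoin_def by blast
    have "r \<odot>\<^bsub>V\<^esub> a = r \<odot>\<^bsub>V\<^esub> a1 \<oplus>\<^bsub>V\<^esub> (r \<otimes> c1) \<odot>\<^bsub>V\<^esub> x"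
      using 1 r GV x by (simp add: V.smult_r_distr V.smult_assoc1)
    moreover have "r \<odot>\<^bsub>M\<^esub> v = r \<odot>\<^bsub>M\<^esub> v1 \<oplus>\<^bsub>M\<^esub> (r \<otimes> c1) \<odot>\<^bsub>M\<^esub> e"
      using 1 r GM e by (simp add: smult_r_distr smult_assoc1)
    ultimately show "(r \<odot>\<^bsub>V\<^esub> a, r \<odot>\<^bsub>M\<^esub> v) \<in> ?G'"
      using Gsmult[OF r 1(1)] r 1(2) unfolding graph_adjoin_def by blast
  next
    fix v assume "(\<zero>\<^bsub>V\<^esub>, v) \<in> ?G'"
    then obtain a1 v1 c1
      where 1: "(a1, v1) \<in> G" "c1 \<in> carrier R" "\<zero>\<^bsub>V\<^esub> = a1 \<oplus>\<^bsub>V\<^esub> c1 \<odot>\<^bsub>V\<^esub> x" "v = v1 \<oplus>\<^bsub>M\<^esub> c1 \<odot>\<^bsub>M\<^esub> e"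
      unfolding graph_adjoin_def by blast
    have a1: "a1 \<in> carrier V" and v1: "v1 \<in> carrier M" using 1 GV GM by blast+
    have "c1 \<odot>\<^bsub>V\<^esub> x = (\<ominus> \<one>) \<odot>\<^bsub>V\<^esub> a1"
      using 1(2,3) a1 x by (metis V.M.add.inv_equality V.M.a_comm V.smult_closed V.smult_l_minus V.smult_one one_closed)
    moreover have "((\<ominus> \<one>) \<odot>\<^bsub>V\<^esub> a1, (\<ominus> \<one>) \<odot>\<^bsub>M\<^esub> v1) \<in> G" using Gsmult 1(1) by simp
    ultimately have "c1 \<odot>\<^bsub>M\<^esub> e = \<ominus>\<^bsub>M\<^esub> v1" using compat[OF 1(2)] v1 by (simp add: smult_l_minus)
    then show "v = \<zero>\<^bsub>M\<^esub>" using 1(4) v1 M.r_neg by simp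
  qed
qed

locale baer_module = module R M for R :: "('a, 'b) ring_scheme" (structure) and M :: "('a, 'e) module" +
  assumes baer: "baer_injective R M"
begin

lemma baer_extension:
  assumes "ideal I R" "\<And>c. c \<in> I \<Longrightarrow> g c \<in> carrier M"
    "\<And>a b. a \<in> I \<Longrightarrow> b \<in> I \<Longrightarrow> g (a \<oplus> b) = g a \<oplus>\<^bsub>M\<^esub> g b"
    "\<And>r a. r \<in> carrier R \<Longrightarrow> a \<in> I \<Longrightarrow> g (r \<otimes> a) = r \<odot>\<^bsub>M\<^esub> g a"
  shows "\<exists>e\<in>carrier M. \<forall>c\<in>I. g c = c \<odot>\<^bsub>M\<^esub> e"
proof -
  have "ideal I R \<and> (\<forall>c\<in>I. g c \<in> carrier M) \<and> (\<forall>a\<in>I. \<forall>b\<in>I. g (a \<oplus> b) = g a \<oplus>\<^bsub>M\<^esub> g b)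
      \<and> (\<forall>r\<in>carrier R. \<forall>a\<in>I. g (r \<otimes> a) = r \<odot>\<^bsub>M\<^esub> g a)"
    using assms by blast
  from mp[OF spec[OF spec[OF baer[unfolded baer_injective_def]]] this] show ?thesis .
qed

text \<open>Baer's criterion, applied to the ideal of those c for which c x already has a
  prescribed value, yields a value for x compatible with G.\<close>
lemma baer_compatible_value:
  assumes V: "module R V" and G: "linear_graph R V M G"
    and x: "x \<in> carrier V"
  shows "\<exists>e\<in>carrier M. \<forall>c\<in>carrier R. \<forall>v. (c \<odot>\<^bsub>V\<^esub> x, v) \<in> G \<longrightarrow> v = c \<odot>\<^bsub>M\<^esub> e"
proof -
  interpret V: module R V by (rule V)
  have GM: "\<And>a v. (a, v) \<in> G \<Longrightarrow> v \<in> carrier M"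
    and Gadd: "\<And>a v b w. (a, v) \<in> G \<Longrightarrow> (b, w) \<in> G \<Longrightarrow> (a \<oplus>\<^bsub>V\<^esub> b, v \<oplus>\<^bsub>M\<^esub> w) \<in> G"
    and Gsmult: "\<And>r a v. r \<in> carrier R \<Longrightarrow> (a, v) \<in> G \<Longrightarrow> (r \<odot>\<^bsub>V\<^esub> a, r \<odot>\<^bsub>M\<^esub> v) \<in> G"
    and G0: "(\<zero>\<^bsub>V\<^esub>, \<zero>\<^bsub>M\<^esub>) \<in> G"
    using G unfolding linear_graph_def by blast+
  define I where "I = {c \<in> carrier R. \<exists>v. (c \<odot>\<^bsub>V\<^esub> x, v) \<in> G}"
  define g where "g c = (THE v. (c \<odot>\<^bsub>V\<^esub> x, v) \<in> G)" for c
  have g_eq: "g c = v" if "(c \<odot>\<^bsub>V\<^esub> x, v) \<in> G" for c v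
    unfolding g_def using that linear_graph_single_valued[OF V G] by blast
  have g_graph: "(c \<odot>\<^bsub>V\<^esub> x, g c) \<in> G" if "c \<in> I" for c
    using that g_eq unfolding I_def by blast
  have I_add: "a \<oplus> b \<in> I \<and> g (a \<oplus> b) = g a \<oplus>\<^bsub>M\<^esub> g b" if "a \<in> I" "b \<in> I" for a b
  proof -
    have "((a \<oplus> b) \<odot>\<^bsub>V\<^esub> x, g a \<oplus>\<^bsub>M\<^esub> g b) \<in> G"
      using Gadd[OF g_graph g_graph] that x by (simp add: V.smult_l_distr I_def)
    then show ?thesis using g_eq that unfolding I_def by blast
  qed
  have I_smult: "r \<otimes> a \<in> I \<and> g (r \<otimes> a) = r \<odot>\<^bsub>M\<^esub> g a" if "a \<in> I" "r \<in> carrier R" for a r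
  proof -
    have "((r \<otimes> a) \<odot>\<^bsub>V\<^esub> x, r \<odot>\<^bsub>M\<^esub> g a) \<in> G"
      using Gsmult[OF that(2) g_graph[OF that(1)]] that x by (simp add: V.smult_assoc1 I_def)
    then show ?thesis using g_eq that unfolding I_def by blast
  qed
  have "\<zero> \<in> I" unfolding I_def using G0 x by auto
  then have "ideal I R" using I_add I_smult by (intro ideal_closedI) (auto simp: I_def)
  then have "\<exists>e\<in>carrier M. \<forall>c\<in>I. g c = c \<odot>\<^bsub>M\<^esub> e"
    by (rule baer_extension) (use g_graph GM I_add I_smult in auto)
  then obtain e where e: "e \<in> carrier M" "\<And>c. c \<in> I \<Longrightarrow> g c = c \<odot>\<^bsub>M\<^esub> e"
    by blast
  show ?thesis
  proof (intro bexI ballI allI impI)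
    fix c v assume cv: "c \<in> carrier R" "(c \<odot>\<^bsub>V\<^esub> x, v) \<in> G"
    then have "c \<in> I" unfolding I_def by blast
    then show "v = c \<odot>\<^bsub>M\<^esub> e" using e(2) g_eq[OF cv(2)] by simp
  qed (rule e(1))
qed

lemma baer_linear_extension:
  assumes V: "module R V" and G0: "linear_graph R V M G0"
  obtains h where "linear_on R V M (carrier V) h" "\<And>a v. (a, v) \<in> G0 \<Longrightarrow> h a = v"
proof -
  obtain G where G: "linear_graph R V M G" "G0 \<subseteq> G"
    and Gmax: "\<And>G'. linear_graph R V M G' \<Longrightarrow> G \<subseteq> G' \<Longrightarrow> G' = G"
    using linear_graph_maximal_extension[OF G0] by metis
  have total: "\<exists>v. (y, v) \<in> G" if y: "y \<in> carrier V" for y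
  proof (rule ccontr)
    assume none: "\<nexists>v. (y, v) \<in> G"
    obtain e where e: "e \<in> carrier M" "\<And>c v. c \<in> carrier R \<Longrightarrow> (c \<odot>\<^bsub>V\<^esub> y, v) \<in> G \<Longrightarrow> v = c \<odot>\<^bsub>M\<^esub> e"
      using baer_compatible_value[OF V G(1) y] by blast
    have "graph_adjoin R V M G y e = G"
      by (rule Gmax[OF linear_graph_adjoin[OF V G(1) y e] graph_adjoin_extends(1)[OF V G(1) y e(1)]])
    then show False using graph_adjoin_extends(2)[OF V G(1) y e(1)] none by simp
  qed
  define h where "h y = (THE v. (y, v) \<in> G)" for y
  have h_eq: "h y = v" if "(y, v) \<in> G" for y v
    unfolding h_def using that linear_graph_single_valued[OF V G(1)] by blast
  have h_graph: "(y, h y) \<in> G" if "y \<in> carrier V" for y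
    using total[OF that] h_eq by blast
  have G_car: "G \<subseteq> carrier V \<times> carrier M"
    and G_add: "\<And>a v b w. (a, v) \<in> G \<Longrightarrow> (b, w) \<in> G \<Longrightarrow> (a \<oplus>\<^bsub>V\<^esub> b, v \<oplus>\<^bsub>M\<^esub> w) \<in> G"
    and G_smult: "\<And>r a v. r \<in> carrier R \<Longrightarrow> (a, v) \<in> G \<Longrightarrow> (r \<odot>\<^bsub>V\<^esub> a, r \<odot>\<^bsub>M\<^esub> v) \<in> G"
    using G(1) unfolding linear_graph_def by blast+
  have lin: "linear_on R V M (carrier V) h"
    unfolding linear_on_def
  proof (intro conjI ballI)
    show "h y \<in> carrier M" if "y \<in> carrier V" for y using h_graph[OF that] G_car by blast
    show "h (y \<oplus>\<^bsub>V\<^esub> z) = h y \<oplus>\<^bsub>M\<^esub> h z" if "y \<in> carrier V" "z \<in> carrier V" for y z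
      using h_eq[OF G_add[OF h_graph h_graph]] that by blast
    show "h (r \<odot>\<^bsub>V\<^esub> y) = r \<odot>\<^bsub>M\<^esub> h y" if "r \<in> carrier R" "y \<in> carrier V" for r y
      using h_eq[OF G_smult[OF that(1) h_graph[OF that(2)]]] .
  qed
  show ?thesis by (rule that[OF lin]) (use h_eq G(2) in blast)
qed

end

definition self_module :: "('a, 'b) ring_scheme \<Rightarrow> ('a, 'a) module" where
  "self_module R = \<lparr>carrier = carrier R, monoid.mult = monoid.mult R, one = monoid.one R,
     ring.zero = ring.zero R, ring.add = ring.add R, smult = monoid.mult R\<rparr>"

lemma self_module_simps [simp]:
  "carrier (self_module R) = carrier R" "ring.add (self_module R) = ring.add R"
  "ring.zero (self_module R) = ring.zero R" "smult (self_module R) = monoid.mult R"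
  by (simp_all add: self_module_def)

lemma (in cring) self_module_module: "module R (self_module R)"
proof (rule moduleI)
  show "abelian_group (self_module R)"
  proof (rule abelian_groupI)
    fix x assume "x \<in> carrier (self_module R)"
    then show "\<exists>y\<in>carrier (self_module R). y \<oplus>\<^bsub>self_module R\<^esub> x = \<zero>\<^bsub>self_module R\<^esub>"
      using l_neg by force
  qed (simp_all add: a_ac)
qed (simp_all add: is_cring l_distr r_distr m_assoc)

lemma (in cring) ideal_submodule_self_module:
  assumes "ideal J R" shows "submodule J R (self_module R)"
proof (rule module.submodule_closedI[OF self_module_module])
  show "J \<subseteq> carrier (self_module R)" using ideal.Icarr[OF assms] by auto
  show "\<zero>\<^bsub>self_module R\<^esub> \<in> J" using additive_subgroup.zero_closed[OF ideal.axioms(1)[OF assms]] by simp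
  show "a \<oplus>\<^bsub>self_module R\<^esub> b \<in> J" if "a \<in> J" "b \<in> J" for a b
    using additive_subgroup.a_closed[OF ideal.axioms(1)[OF assms] that] by simp
  show "a \<odot>\<^bsub>self_module R\<^esub> x \<in> J" if "a \<in> carrier R" "x \<in> J" for a x
    using ideal.I_l_closed[OF assms that(2,1)] by simp
qed

section \<open>Tensor relations and functionals\<close>

text \<open>All R-valued functions, not only finitely supported ones: the ambient module of
  tensor_relations.\<close>
definition fun_module :: "('a, 'b) ring_scheme \<Rightarrow> ('a, 'c \<Rightarrow> 'a) module" where
  "fun_module R = \<lparr>carrier = {F. \<forall>q. F q \<in> carrier R}, monoid.mult = undefined, one = undefined,
     ring.zero = (\<lambda>_. \<zero>\<^bsub>R\<^esub>), ring.add = fadd R, smult = fsmult R\<rparr>"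

lemma fun_module_carrier: "F \<in> carrier (fun_module R) \<longleftrightarrow> (\<forall>q. F q \<in> carrier R)"
  by (simp add: fun_module_def)

lemma fun_module_simps [simp]:
  "ring.add (fun_module R) = fadd R" "ring.zero (fun_module R) = (\<lambda>_. \<zero>\<^bsub>R\<^esub>)"
  "smult (fun_module R) = fsmult R"
  by (simp_all add: fun_module_def)

lemma (in cring) fun_module_module: "module R (fun_module R)"
proof (rule moduleI)
  show "abelian_group (fun_module R)"
  proof (rule abelian_groupI)
    fix F assume "F \<in> carrier (fun_module R)"
    then have "(\<lambda>q. \<ominus> F q) \<in> carrier (fun_module R)"
      and "(\<lambda>q. \<ominus> F q) \<oplus>\<^bsub>fun_module R\<^esub> F = \<zero>\<^bsub>fun_module R\<^esub>"
      by (simp_all add: fun_module_carrier fadd_def l_neg)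
    then show "\<exists>G\<in>carrier (fun_module R). G \<oplus>\<^bsub>fun_module R\<^esub> F = \<zero>\<^bsub>fun_module R\<^esub>" by blast
  qed (auto simp: fun_module_carrier fadd_def a_ac)
qed (auto simp: fun_module_carrier is_cring fadd_def fsmult_def l_distr r_distr m_assoc)

lemma (in cring) fun_module_minus:
  assumes "F \<in> carrier (fun_module R)" "G \<in> carrier (fun_module R)"
  shows "fsub R F G = F \<ominus>\<^bsub>fun_module R\<^esub> G"
proof -
  interpret V: module R "fun_module R" by (rule fun_module_module)
  have "\<ominus>\<^bsub>fun_module R\<^esub> G = (\<lambda>q. \<ominus> G q)"
    by (rule V.M.add.inv_equality) (use assms(2) in \<open>simp_all add: fun_module_carrier fadd_def l_neg\<close>)
  then show ?thesis using assms by (simp add: fun_module_carrier a_minus_def fadd_def fsub_def minus_eq)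
qed

lemma (in ring) fdelta_carrier [simp]: "fdelta R p \<in> carrier (fun_module R)"
  unfolding fdelta_def fun_module_carrier by simp

lemma (in ring) fsub_carrier [simp]:
  "F \<in> carrier (fun_module R) \<Longrightarrow> G \<in> carrier (fun_module R) \<Longrightarrow> fsub R F G \<in> carrier (fun_module R)"
  by (simp add: fun_module_carrier fsub_def)

lemma (in ring) fsmult_carrier [simp]:
  "r \<in> carrier R \<Longrightarrow> G \<in> carrier (fun_module R) \<Longrightarrow> fsmult R r G \<in> carrier (fun_module R)"
  by (simp add: fun_module_carrier fsmult_def)

lemma (in ring) tensor_relations_carrier:
  "F \<in> tensor_relations R L E \<Longrightarrow> F \<in> carrier (fun_module R)"
  by (induction rule: tensor_relations.induct) (simp_all add: fun_module_carrier fadd_def fsmult_def fsub_def fdelta_def)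

lemma (in cring) tensor_relations_submodule:
  "submodule (tensor_relations R L E) R (fun_module R)"
proof (rule module.submodule_closedI[OF fun_module_module])
  show "tensor_relations R L E \<subseteq> carrier (fun_module R)"
    using tensor_relations_carrier by blast
qed (simp_all add: tensor_relations.zero tensor_relations.sum tensor_relations.scale)

text \<open>For a functional f on L, the bilinear pairing (x, u) \<mapsto> f x u of L and E, extended
  to finite formal combinations: F restricted to the finite set B of pairs.\<close>
locale functional_pairing = module R E + L: module R L
  for R :: "('a, 'b) ring_scheme" (structure) and L :: "('a, 'l) module" and E :: "('a, 'e) module" +
  fixes f :: "'l \<Rightarrow> 'a"
  assumes f: "f \<in> lin_functionals R L"
begin

definition pairing_sum :: "('l \<times> 'e) set \<Rightarrow> ('l \<times> 'e \<Rightarrow> 'a) \<Rightarrow> 'e" where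
  "pairing_sum B F = finsum E (\<lambda>q. (F q \<otimes> f (fst q)) \<odot>\<^bsub>E\<^esub> snd q) B"

lemma f_closed: "x \<in> carrier L \<Longrightarrow> f x \<in> carrier R"
  using f unfolding lin_functionals_def by blast

lemma f_add: "x \<in> carrier L \<Longrightarrow> y \<in> carrier L \<Longrightarrow> f (x \<oplus>\<^bsub>L\<^esub> y) = f x \<oplus> f y"
  using f unfolding lin_functionals_def by blast

lemma f_smult: "r \<in> carrier R \<Longrightarrow> x \<in> carrier L \<Longrightarrow> f (r \<odot>\<^bsub>L\<^esub> x) = r \<otimes> f x"
  using f unfolding lin_functionals_def by blast

lemma pairing_term_closed:
  assumes "F \<in> carrier (fun_module R)" "B \<subseteq> carrier L \<times> carrier E"
  shows "(\<lambda>q. (F q \<otimes> f (fst q)) \<odot>\<^bsub>E\<^esub> snd q) \<in> B \<rightarrow> carrier E"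
  using assms f_closed by (auto simp: fun_module_carrier subset_iff)

lemma pairing_sum_closed:
  "F \<in> carrier (fun_module R) \<Longrightarrow> B \<subseteq> carrier L \<times> carrier E \<Longrightarrow> pairing_sum B F \<in> carrier E"
  unfolding pairing_sum_def using pairing_term_closed by (rule M.finsum_closed)

lemma pairing_sum_add:
  assumes F: "F \<in> carrier (fun_module R)" and G: "G \<in> carrier (fun_module R)"
    and B: "B \<subseteq> carrier L \<times> carrier E"
  shows "pairing_sum B (fadd R F G) = pairing_sum B F \<oplus>\<^bsub>E\<^esub> pairing_sum B G"
proof -
  have "pairing_sum B (fadd R F G)
      = finsum E (\<lambda>q. (F q \<otimes> f (fst q)) \<odot>\<^bsub>E\<^esub> snd q \<oplus>\<^bsub>E\<^esub> (G q \<otimes> f (fst q)) \<odot>\<^bsub>E\<^esub> snd q) B"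
    unfolding pairing_sum_def
  proof (rule M.finsum_cong')
    show "(\<lambda>q. (F q \<otimes> f (fst q)) \<odot>\<^bsub>E\<^esub> snd q \<oplus>\<^bsub>E\<^esub> (G q \<otimes> f (fst q)) \<odot>\<^bsub>E\<^esub> snd q) \<in> B \<rightarrow> carrier E"
      using pairing_term_closed[OF F B] pairing_term_closed[OF G B] by (auto simp: Pi_def)
    fix q assume "q \<in> B"
    then show "(fadd R F G q \<otimes> f (fst q)) \<odot>\<^bsub>E\<^esub> snd q
        = (F q \<otimes> f (fst q)) \<odot>\<^bsub>E\<^esub> snd q \<oplus>\<^bsub>E\<^esub> (G q \<otimes> f (fst q)) \<odot>\<^bsub>E\<^esub> snd q"
      using F G B f_closed by (auto simp: fun_module_carrier fadd_def R.l_distr smult_l_distr)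
  qed simp
  also have "\<dots> = pairing_sum B F \<oplus>\<^bsub>E\<^esub> pairing_sum B G"
    unfolding pairing_sum_def by (rule M.finsum_addf[OF pairing_term_closed[OF F B] pairing_term_closed[OF G B]])
  finally show ?thesis .
qed

lemma pairing_sum_smult:
  assumes r: "r \<in> carrier R" and F: "F \<in> carrier (fun_module R)"
    and B: "B \<subseteq> carrier L \<times> carrier E" "finite B"
  shows "pairing_sum B (fsmult R r F) = r \<odot>\<^bsub>E\<^esub> pairing_sum B F"
proof -
  have "pairing_sum B (fsmult R r F) = finsum E (\<lambda>q. r \<odot>\<^bsub>E\<^esub> ((F q \<otimes> f (fst q)) \<odot>\<^bsub>E\<^esub> snd q)) B"
    unfolding pairing_sum_def
  proof (rule M.finsum_cong')
    show "(\<lambda>q. r \<odot>\<^bsub>E\<^esub> ((F q \<otimes> f (fst q)) \<odot>\<^bsub>E\<^esub> snd q)) \<in> B \<rightarrow> carrier E"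
      using pairing_term_closed[OF F B(1)] r by (auto simp: Pi_def)
    fix q assume "q \<in> B"
    then show "(fsmult R r F q \<otimes> f (fst q)) \<odot>\<^bsub>E\<^esub> snd q = r \<odot>\<^bsub>E\<^esub> ((F q \<otimes> f (fst q)) \<odot>\<^bsub>E\<^esub> snd q)"
      using F r B(1) f_closed by (auto simp: fun_module_carrier fsmult_def R.m_assoc smult_assoc1)
  qed simp
  also have "\<dots> = r \<odot>\<^bsub>E\<^esub> pairing_sum B F"
    unfolding pairing_sum_def by (rule finsum_smult_ldistr[OF B(2) r pairing_term_closed[OF F B(1)], symmetric])
  finally show ?thesis .
qed

lemma pairing_sum_sub:
  assumes F: "F \<in> carrier (fun_module R)" and G: "G \<in> carrier (fun_module R)"
    and B: "B \<subseteq> carrier L \<times> carrier E" "finite B"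
  shows "pairing_sum B (fsub R F G) = pairing_sum B F \<ominus>\<^bsub>E\<^esub> pairing_sum B G"
proof -
  have "fsub R F G = fadd R F (fsmult R (\<ominus> \<one>) G)"
    using F G by (auto simp: fun_module_carrier fsub_def fadd_def fsmult_def a_minus_def R.l_minus)
  moreover have "fsmult R (\<ominus> \<one>) G \<in> carrier (fun_module R)" by (intro fsmult_carrier G) simp
  ultimately have "pairing_sum B (fsub R F G) = pairing_sum B F \<oplus>\<^bsub>E\<^esub> (\<ominus> \<one>) \<odot>\<^bsub>E\<^esub> pairing_sum B G"
    using pairing_sum_add[OF F _ B(1)] pairing_sum_smult[OF _ G B] by simp
  then show ?thesis using pairing_sum_closed[OF G B(1)] by (simp add: smult_l_minus M.minus_eq)
qed

lemma pairing_sum_fdelta: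
  assumes p: "p \<in> B" and B: "B \<subseteq> carrier L \<times> carrier E" "finite B"
  shows "pairing_sum B (fdelta R p) = f (fst p) \<odot>\<^bsub>E\<^esub> snd p"
proof -
  let ?t = "\<lambda>q. (fdelta R p q \<otimes> f (fst q)) \<odot>\<^bsub>E\<^esub> snd q"
  have t: "?t \<in> B \<rightarrow> carrier E" by (rule pairing_term_closed[OF fdelta_carrier B(1)])
  have pLE: "fst p \<in> carrier L" "snd p \<in> carrier E" using p B(1) by auto
  have "finsum E ?t (B - {p}) = finsum E (\<lambda>q. \<zero>\<^bsub>E\<^esub>) (B - {p})"
    by (rule M.finsum_cong') (use B(1) f_closed in \<open>auto simp: fdelta_def\<close>)
  then have rest: "finsum E ?t (B - {p}) = \<zero>\<^bsub>E\<^esub>" by simp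
  have "pairing_sum B (fdelta R p) = finsum E ?t (insert p (B - {p}))"
    unfolding pairing_sum_def using p by (simp add: insert_absorb)
  also have "\<dots> = ?t p \<oplus>\<^bsub>E\<^esub> finsum E ?t (B - {p})"
    by (rule M.finsum_insert) (use B(2) t p in auto)
  also have "\<dots> = f (fst p) \<odot>\<^bsub>E\<^esub> snd p"
    unfolding rest using pLE f_closed[OF pLE(1)] by (simp add: fdelta_def)
  finally show ?thesis .
qed

lemma pairing_sum_fdelta_relation3:
  assumes "{p1, p2, p3} \<subseteq> B" and B: "B \<subseteq> carrier L \<times> carrier E" "finite B"
  shows "pairing_sum B (fsub R (fsub R (fdelta R p1) (fdelta R p2)) (fdelta R p3))
    = (f (fst p1) \<odot>\<^bsub>E\<^esub> snd p1 \<ominus>\<^bsub>E\<^esub> f (fst p2) \<odot>\<^bsub>E\<^esub> snd p2) \<ominus>\<^bsub>E\<^esub> f (fst p3) \<odot>\<^bsub>E\<^esub> snd p3"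
  using assms by (simp add: pairing_sum_sub pairing_sum_fdelta)

lemma pairing_sum_fdelta_relation2:
  assumes "{p1, p2} \<subseteq> B" and B: "B \<subseteq> carrier L \<times> carrier E" "finite B" and r: "r \<in> carrier R"
  shows "pairing_sum B (fsub R (fdelta R p1) (fsmult R r (fdelta R p2)))
    = f (fst p1) \<odot>\<^bsub>E\<^esub> snd p1 \<ominus>\<^bsub>E\<^esub> r \<odot>\<^bsub>E\<^esub> (f (fst p2) \<odot>\<^bsub>E\<^esub> snd p2)"
  using assms by (simp add: pairing_sum_sub pairing_sum_smult pairing_sum_fdelta)

text \<open>Relations need not be finitely supported as functions, so we evaluate them
  on all sufficiently large finite sets of pairs.\<close>
lemma tensor_relation_pairing_vanishes:
  assumes "F \<in> tensor_relations R L E"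
  shows "\<exists>A. finite A \<and> A \<subseteq> carrier L \<times> carrier E \<and>
    (\<forall>B. finite B \<and> A \<subseteq> B \<and> B \<subseteq> carrier L \<times> carrier E \<longrightarrow> pairing_sum B F = \<zero>\<^bsub>E\<^esub>)"
  using assms
proof (induction rule: tensor_relations.induct)
  case zero
  have "pairing_sum B (\<lambda>_. \<zero>) = \<zero>\<^bsub>E\<^esub>" if "B \<subseteq> carrier L \<times> carrier E" for B
  proof -
    have "pairing_sum B (\<lambda>_. \<zero>) = finsum E (\<lambda>q. \<zero>\<^bsub>E\<^esub>) B"
      unfolding pairing_sum_def by (rule M.finsum_cong') (use that f_closed in \<open>auto simp: subset_iff\<close>)
    then show ?thesis by simp
  qed
  then show ?case by (intro exI[of _ "{}"]) auto
next
  case (add_left x y u)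
  then show ?case
    by (intro exI[of _ "{(x \<oplus>\<^bsub>L\<^esub> y, u), (x, u), (y, u)}"])
      (auto simp: pairing_sum_fdelta_relation3 f_add f_closed smult_l_distr M.add_minus_minus_cancel)
next
  case (add_right x u v)
  then show ?case
    by (intro exI[of _ "{(x, u \<oplus>\<^bsub>E\<^esub> v), (x, u), (x, v)}"])
      (auto simp: pairing_sum_fdelta_relation3 f_closed smult_r_distr M.add_minus_minus_cancel)
next
  case (smult_left r x u)
  then show ?case
    by (intro exI[of _ "{(r \<odot>\<^bsub>L\<^esub> x, u), (x, u)}"])
      (auto simp: pairing_sum_fdelta_relation2 f_smult f_closed smult_assoc1 M.minus_eq M.r_neg)
next
  case (smult_right r x u)
  then show ?case
    by (intro exI[of _ "{(x, r \<odot>\<^bsub>E\<^esub> u), (x, u)}"])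
      (auto simp: pairing_sum_fdelta_relation2 f_closed smult_commute M.minus_eq M.r_neg)
next
  case (sum F G)
  then obtain A1 A2 where A: "finite A1" "A1 \<subseteq> carrier L \<times> carrier E" "finite A2" "A2 \<subseteq> carrier L \<times> carrier E"
    and A1: "\<And>B. finite B \<and> A1 \<subseteq> B \<and> B \<subseteq> carrier L \<times> carrier E \<Longrightarrow> pairing_sum B F = \<zero>\<^bsub>E\<^esub>"
    and A2: "\<And>B. finite B \<and> A2 \<subseteq> B \<and> B \<subseteq> carrier L \<times> carrier E \<Longrightarrow> pairing_sum B G = \<zero>\<^bsub>E\<^esub>"
    by blast
  have "pairing_sum B (fadd R F G) = \<zero>\<^bsub>E\<^esub>" if "finite B" "A1 \<union> A2 \<subseteq> B" "B \<subseteq> carrier L \<times> carrier E" for B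
    using pairing_sum_add[OF tensor_relations_carrier[OF sum.hyps(1)]
        tensor_relations_carrier[OF sum.hyps(2)] that(3)] A1 A2 that by simp
  then show ?case using A by (intro exI[of _ "A1 \<union> A2"]) auto
next
  case (scale r F)
  then obtain A where A: "finite A" "A \<subseteq> carrier L \<times> carrier E"
    and AF: "\<And>B. finite B \<and> A \<subseteq> B \<and> B \<subseteq> carrier L \<times> carrier E \<Longrightarrow> pairing_sum B F = \<zero>\<^bsub>E\<^esub>"
    by blast
  have "pairing_sum B (fsmult R r F) = \<zero>\<^bsub>E\<^esub>" if "finite B" "A \<subseteq> B" "B \<subseteq> carrier L \<times> carrier E" for B
    using pairing_sum_smult[OF scale.hyps(1) tensor_relations_carrier[OF scale.hyps(2)] that(3,1)]
      AF that scale.hyps(1) by simp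
  then show ?case using A by (intro exI[of _ A]) auto
qed

lemma tensor_zero_imp_smult_zero:
  assumes "tensor_zero R L E s u" and s: "s \<in> carrier L" and u: "u \<in> carrier E"
  shows "f s \<odot>\<^bsub>E\<^esub> u = \<zero>\<^bsub>E\<^esub>"
proof -
  from tensor_relation_pairing_vanishes[OF assms(1)[unfolded tensor_zero_def]]
  obtain A where A: "finite A" "A \<subseteq> carrier L \<times> carrier E"
    and AF: "\<forall>B. finite B \<and> A \<subseteq> B \<and> B \<subseteq> carrier L \<times> carrier E \<longrightarrow> pairing_sum B (fdelta R (s, u)) = \<zero>\<^bsub>E\<^esub>"
    by blast
  let ?B = "insert (s, u) A"
  have B: "finite ?B" "?B \<subseteq> carrier L \<times> carrier E" using A s u by auto
  then have "pairing_sum ?B (fdelta R (s, u)) = \<zero>\<^bsub>E\<^esub>" using AF by (simp add: subset_insertI)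
  then show ?thesis using pairing_sum_fdelta[OF _ B(2,1)] by simp
qed

end

section \<open>The injective hull of the residue field\<close>

definition annihilated :: "('a, 'e) module \<Rightarrow> 'a set \<Rightarrow> 'e set" where
  "annihilated E J = {u \<in> carrier E. \<forall>j\<in>J. j \<odot>\<^bsub>E\<^esub> u = \<zero>\<^bsub>E\<^esub>}"

lemma annihilated_subset: "annihilated E J \<subseteq> carrier E"
  unfolding annihilated_def by blast

definition scalar_endos :: "('a, 'b) ring_scheme \<Rightarrow> ('a, 'e) module \<Rightarrow> 'e set \<Rightarrow> bool" where
  "scalar_endos R E U \<longleftrightarrow>
     (\<forall>\<psi>. linear_on R E E U \<psi> \<longrightarrow> (\<exists>a\<in>carrier R. \<forall>u\<in>U. \<psi> u = a \<odot>\<^bsub>E\<^esub> u))"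

locale residue_field_hull = baer_module R E for R :: "('a, 'b) ring_scheme" (structure)
    and E :: "('a, 'e) module" +
  fixes m :: "'a set" and e0 :: 'e
  assumes noetherian: "noetherian_ring R" and local: "local_ring R m"
    and e0: "e0 \<in> carrier E" and annihilator_e0: "annihilator R E {e0} = m"
    and essential: "\<And>N. submodule N R E \<Longrightarrow> N \<noteq> {\<zero>\<^bsub>E\<^esub>} \<Longrightarrow>
      \<exists>r\<in>carrier R. r \<odot>\<^bsub>E\<^esub> e0 \<in> N \<and> r \<odot>\<^bsub>E\<^esub> e0 \<noteq> \<zero>\<^bsub>E\<^esub>"
begin

lemma m_maximal: "maximalideal m R"
  using local unfolding local_ring_def by blast

lemma m_ideal: "ideal m R"
  using maximalideal.axioms(1)[OF m_maximal] .

lemma m_subset: "m \<subseteq> carrier R"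
  using ideal.Icarr[OF m_ideal] by blast

lemma not_in_m_imp_unit:
  assumes "a \<in> carrier R" "a \<notin> m" shows "a \<in> Units R"
  using nonunit_in_maximalideal[OF noetherian assms(1)] local assms(2)
  unfolding local_ring_def by blast

lemma smult_e0_eq_zero_iff: "a \<in> carrier R \<Longrightarrow> a \<odot>\<^bsub>E\<^esub> e0 = \<zero>\<^bsub>E\<^esub> \<longleftrightarrow> a \<in> m"
  using annihilator_e0 unfolding annihilator_def by blast

lemma e0_nonzero: "e0 \<noteq> \<zero>\<^bsub>E\<^esub>"
proof
  assume "e0 = \<zero>\<^bsub>E\<^esub>"
  then have "\<one> \<in> m" using smult_e0_eq_zero_iff[of \<one>] by simp
  then show False
    using ideal.one_imp_carrier[OF m_ideal] maximalideal.I_notcarr[OF m_maximal] by simp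
qed

lemma annihilator_ideal: "U \<subseteq> carrier E \<Longrightarrow> ideal (annihilator R E U) R"
  unfolding annihilator_def
  by (rule ideal_closedI) (auto simp: subset_iff smult_l_distr smult_assoc1)

lemma annihilated_smult:
  assumes "J \<subseteq> carrier R" "r \<in> carrier R" "u \<in> annihilated E J"
  shows "r \<odot>\<^bsub>E\<^esub> u \<in> annihilated E J"
  using assms unfolding annihilated_def by (auto simp: subset_iff smult_commute[of _ r u])

lemma annihilated_add:
  assumes "J \<subseteq> carrier R" "u \<in> annihilated E J" "v \<in> annihilated E J"
  shows "u \<oplus>\<^bsub>E\<^esub> v \<in> annihilated E J"
  using assms unfolding annihilated_def by (auto simp: subset_iff smult_r_distr)

lemma annihilated_genideal:
  assumes S: "S \<subseteq> carrier R" shows "annihilated E (Idl S) = annihilated E S"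
proof
  show "annihilated E (Idl S) \<subseteq> annihilated E S"
    unfolding annihilated_def using genideal_self[OF S] by blast
  show "annihilated E S \<subseteq> annihilated E (Idl S)"
  proof
    fix u assume u: "u \<in> annihilated E S"
    then have "S \<subseteq> annihilator R E {u}" using S unfolding annihilated_def annihilator_def by blast
    then have "Idl S \<subseteq> annihilator R E {u}"
      using genideal_minimal[OF annihilator_ideal] u unfolding annihilated_def by blast
    then show "u \<in> annihilated E (Idl S)" using u unfolding annihilated_def annihilator_def by blast
  qed
qed

text \<open>The graph k + c x \<mapsto> c e0 is well defined because c x \<in> K forces c \<in> m (else c is a unit).\<close>
lemma separating_hom:
  assumes V: "module R V" and K: "submodule K R V" and x: "x \<in> carrier V" "x \<notin> K"
  shows "\<exists>h. linear_on R V E (carrier V) h \<and> (\<forall>k\<in>K. h k = \<zero>\<^bsub>E\<^esub>) \<and> h x = e0"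
proof -
  interpret V: module R V by (rule V)
  let ?Z = "K \<times> {\<zero>\<^bsub>E\<^esub>}"
  have compat: "v = c \<odot>\<^bsub>E\<^esub> e0" if c: "c \<in> carrier R" and cx: "(c \<odot>\<^bsub>V\<^esub> x, v) \<in> ?Z" for c v
  proof -
    have "c \<in> m"
    proof (rule ccontr)
      assume "c \<notin> m"
      then have u: "c \<in> Units R" using not_in_m_imp_unit c by blast
      then have "inv c \<odot>\<^bsub>V\<^esub> (c \<odot>\<^bsub>V\<^esub> x) \<in> K" using V.submoduleE(4)[OF K] cx by auto
      moreover have "inv c \<odot>\<^bsub>V\<^esub> (c \<odot>\<^bsub>V\<^esub> x) = x"
        using u x(1) c V.smult_assoc1[symmetric, of "inv c" c x] by simp
      ultimately show False using x(2) by simp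
    qed
    then show ?thesis using cx smult_e0_eq_zero_iff[OF c] by simp
  qed
  let ?G = "graph_adjoin R V E ?Z x e0"
  have G0: "linear_graph R V E ?Z" by (rule linear_graph_zero_on_submodule[OF V K])
  obtain h where h: "linear_on R V E (carrier V) h" and hG: "\<And>a v. (a, v) \<in> ?G \<Longrightarrow> h a = v"
    using baer_linear_extension[OF V linear_graph_adjoin[OF V G0 x(1) e0 compat]] by blast
  have "h k = \<zero>\<^bsub>E\<^esub>" if "k \<in> K" for k
    using hG graph_adjoin_extends(1)[OF V G0 x(1) e0] that by blast
  moreover have "h x = e0" using hG graph_adjoin_extends(2)[OF V G0 x(1) e0] by blast
  ultimately show ?thesis using h by blast
qed

lemma annihilated_witness:
  assumes J: "ideal J R" and r: "r \<in> carrier R" "r \<notin> J"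
  shows "\<exists>u\<in>annihilated E J. r \<odot>\<^bsub>E\<^esub> u = e0"
proof -
  obtain h where h: "linear_on R (self_module R) E (carrier R) h"
    and hJ: "\<forall>j\<in>J. h j = \<zero>\<^bsub>E\<^esub>" and hr: "h r = e0"
    using separating_hom[OF self_module_module ideal_submodule_self_module[OF J]] r by auto
  have h_smult: "h a = a \<odot>\<^bsub>E\<^esub> h \<one>" if "a \<in> carrier R" for a
    using linear_on_smult[OF h that, of \<one>] that by simp
  have "h \<one> \<in> carrier E" using linear_on_closed[OF h, of \<one>] by simp
  moreover have "j \<odot>\<^bsub>E\<^esub> h \<one> = \<zero>\<^bsub>E\<^esub>" if "j \<in> J" for j
    using hJ h_smult[OF ideal.Icarr[OF J that]] that by simp
  ultimately have "h \<one> \<in> annihilated E J" unfolding annihilated_def by blast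
  then show ?thesis using hr h_smult[OF r(1)] by auto
qed

lemma annihilator_annihilated:
  assumes J: "ideal J R" shows "annihilator R E (annihilated E J) = J"
proof
  show "J \<subseteq> annihilator R E (annihilated E J)"
    using ideal.Icarr[OF J] unfolding annihilator_def annihilated_def by blast
  show "annihilator R E (annihilated E J) \<subseteq> J"
  proof
    fix r assume r: "r \<in> annihilator R E (annihilated E J)"
    show "r \<in> J"
    proof (rule ccontr)
      assume "r \<notin> J"
      then obtain u where "u \<in> annihilated E J" "r \<odot>\<^bsub>E\<^esub> u = e0"
        using annihilated_witness[OF J] r unfolding annihilator_def by blast
      then show False using r e0_nonzero unfolding annihilator_def by auto
    qed
  qed
qed

lemma smult_eq_imp_scalar_eq:
  assumes a: "a \<in> carrier R" and b: "b \<in> carrier R"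
    and ab: "\<And>v. v \<in> carrier E \<Longrightarrow> a \<odot>\<^bsub>E\<^esub> v = b \<odot>\<^bsub>E\<^esub> v"
  shows "a = b"
proof -
  have "annihilated E {\<zero>} = carrier E" unfolding annihilated_def by auto
  then have "annihilator R E (carrier E) = {\<zero>}" using annihilator_annihilated[OF zeroideal] by simp
  moreover have "a \<ominus> b \<in> annihilator R E (carrier E)"
    using a b ab smult_minus_eq_zero_iff unfolding annihilator_def by simp
  ultimately show ?thesis using a b by (simp add: R.minus_eq_zero_iff)
qed

lemma essential_cyclic:
  assumes v: "v \<in> carrier E" "v \<noteq> \<zero>\<^bsub>E\<^esub>"
  obtains r c where "r \<in> carrier R" "c \<in> carrier R" "r \<odot>\<^bsub>E\<^esub> e0 = c \<odot>\<^bsub>E\<^esub> v" "r \<odot>\<^bsub>E\<^esub> e0 \<noteq> \<zero>\<^bsub>E\<^esub>"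
proof -
  let ?N = "(\<lambda>c. c \<odot>\<^bsub>E\<^esub> v) ` carrier R"
  have "submodule ?N R E"
  proof (rule submodule_closedI)
    have "\<zero> \<odot>\<^bsub>E\<^esub> v \<in> ?N" by blast
    then show "\<zero>\<^bsub>E\<^esub> \<in> ?N" using v(1) by simp
    show "a \<oplus>\<^bsub>E\<^esub> b \<in> ?N" if ab: "a \<in> ?N" "b \<in> ?N" for a b
    proof -
      obtain c d where "c \<in> carrier R" "d \<in> carrier R" "a = c \<odot>\<^bsub>E\<^esub> v" "b = d \<odot>\<^bsub>E\<^esub> v"
        using ab by blast
      moreover have "(c \<oplus> d) \<odot>\<^bsub>E\<^esub> v \<in> ?N" using calculation by blast
      ultimately show ?thesis using v(1) by (simp add: smult_l_distr)
    qed
    show "a \<odot>\<^bsub>E\<^esub> x \<in> ?N" if a: "a \<in> carrier R" and x: "x \<in> ?N" for a x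
    proof -
      obtain c where "c \<in> carrier R" "x = c \<odot>\<^bsub>E\<^esub> v" using x by blast
      moreover have "(a \<otimes> c) \<odot>\<^bsub>E\<^esub> v \<in> ?N" using calculation a by blast
      ultimately show ?thesis using a v(1) by (simp add: smult_assoc1)
    qed
  qed (use v(1) in auto)
  moreover have "\<one> \<odot>\<^bsub>E\<^esub> v \<in> ?N" by blast
  then have "v \<in> ?N" using v(1) by simp
  ultimately obtain r where "r \<in> carrier R" "r \<odot>\<^bsub>E\<^esub> e0 \<in> ?N" "r \<odot>\<^bsub>E\<^esub> e0 \<noteq> \<zero>\<^bsub>E\<^esub>"
    using essential v(2) by blast
  then show ?thesis using that by blast
qed

lemma annihilated_m_cyclic:
  assumes v: "v \<in> annihilated E m" shows "\<exists>c\<in>carrier R. v = c \<odot>\<^bsub>E\<^esub> e0"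
proof (cases "v = \<zero>\<^bsub>E\<^esub>")
  case True
  then show ?thesis using e0 by (intro bexI[of _ \<zero>]) simp_all
next
  case False
  have vE: "v \<in> carrier E" using v unfolding annihilated_def by blast
  obtain r c where rc: "r \<in> carrier R" "c \<in> carrier R" "r \<odot>\<^bsub>E\<^esub> e0 = c \<odot>\<^bsub>E\<^esub> v" "r \<odot>\<^bsub>E\<^esub> e0 \<noteq> \<zero>\<^bsub>E\<^esub>"
    using essential_cyclic[OF vE False] .
  have "c \<notin> m" using v rc(3,4) unfolding annihilated_def by auto
  then have u: "c \<in> Units R" using not_in_m_imp_unit rc(2) by blast
  have "(inv c \<otimes> r) \<odot>\<^bsub>E\<^esub> e0 = inv c \<odot>\<^bsub>E\<^esub> (c \<odot>\<^bsub>E\<^esub> v)"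
    using rc u e0 by (simp add: smult_assoc1)
  also have "\<dots> = v" using u vE rc(2) smult_assoc1[symmetric, of "inv c" c v] by simp
  finally show ?thesis using u rc(1) by (intro bexI[of _ "inv c \<otimes> r"]) auto
qed

lemma m_nilpotent:
  assumes e: "e \<in> carrier E" and y: "y \<in> m"
  shows "\<exists>k. (y [^] (k::nat)) \<odot>\<^bsub>E\<^esub> e = \<zero>\<^bsub>E\<^esub>"
proof (rule ccontr)
  assume nz: "\<not> ?thesis"
  have yR: "y \<in> carrier R" using y m_subset by blast
  define A where "A i = annihilator R E {(y [^] (i::nat)) \<odot>\<^bsub>E\<^esub> e}" for i
  have "A i \<subseteq> A (Suc i)" for i
  proof
    fix c assume "c \<in> A i"
    then have c: "c \<in> carrier R" "c \<odot>\<^bsub>E\<^esub> ((y [^] i) \<odot>\<^bsub>E\<^esub> e) = \<zero>\<^bsub>E\<^esub>"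
      unfolding A_def annihilator_def by auto
    have "c \<odot>\<^bsub>E\<^esub> ((y [^] Suc i) \<odot>\<^bsub>E\<^esub> e) = y \<odot>\<^bsub>E\<^esub> (c \<odot>\<^bsub>E\<^esub> ((y [^] i) \<odot>\<^bsub>E\<^esub> e))"
      using c(1) yR e by (simp add: smult_assoc1[symmetric] m_ac)
    then show "c \<in> A (Suc i)" using c yR unfolding A_def annihilator_def by simp
  qed
  then obtain k where k: "A (Suc k) = A k"
    using noetherian_ring.ascending_chain_stabilizes[OF noetherian, of A] annihilator_ideal e yR
    unfolding A_def by auto
  let ?v = "(y [^] k) \<odot>\<^bsub>E\<^esub> e"
  obtain r c where rc: "r \<in> carrier R" "c \<in> carrier R" "r \<odot>\<^bsub>E\<^esub> e0 = c \<odot>\<^bsub>E\<^esub> ?v" "r \<odot>\<^bsub>E\<^esub> e0 \<noteq> \<zero>\<^bsub>E\<^esub>"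
    using essential_cyclic[of ?v] nz e yR by auto
  have "(y \<otimes> r) \<odot>\<^bsub>E\<^esub> e0 = \<zero>\<^bsub>E\<^esub>"
    using ideal.I_r_closed[OF m_ideal y rc(1)] smult_e0_eq_zero_iff yR rc(1) by simp
  then have "y \<odot>\<^bsub>E\<^esub> (c \<odot>\<^bsub>E\<^esub> ?v) = \<zero>\<^bsub>E\<^esub>"
    using rc(1,3) yR e0 by (simp add: smult_assoc1)
  moreover have "y \<odot>\<^bsub>E\<^esub> (c \<odot>\<^bsub>E\<^esub> ?v) = c \<odot>\<^bsub>E\<^esub> ((y [^] Suc k) \<odot>\<^bsub>E\<^esub> e)"
    using rc yR e by (simp add: smult_assoc1[symmetric] m_ac)
  ultimately have "c \<in> A (Suc k)" unfolding A_def annihilator_def using rc(2) by simp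
  then have "c \<in> A k" using k by simp
  then show False using rc(3,4) unfolding A_def annihilator_def by simp
qed

text \<open>If the ascending chain (ann e : m^i) stopped at a proper ideal Q, an associated
  prime P of R/Q would miss some y \<in> m (else z m \<subseteq> Q puts z into the next member);
  but y is nilpotent on e, so a power of y lies in Q \<subseteq> P.\<close>
lemma m_power_torsion:
  assumes e: "e \<in> carrier E" shows "\<exists>k. e \<in> annihilated E (ideal_pow R m k)"
proof -
  let ?Ann = "annihilator R E {e}"
  define Q where "Q i = ideal_colon R ?Ann (ideal_pow R m i)" for i
  have Ann: "ideal ?Ann R" using annihilator_ideal e by simp
  have mpow: "ideal (ideal_pow R m i) R" for i by (rule ideal_pow_ideal[OF is_cring m_ideal])
  have Q: "ideal (Q i) R" for i
    unfolding Q_def by (rule ideal_colon_ideal[OF Ann]) (use ideal.Icarr[OF mpow] in blast)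
  have "Q i \<subseteq> Q (Suc i)" for i
    using ideal_pow_antimono[OF is_cring m_ideal, of i "Suc i"] unfolding Q_def ideal_colon_def by auto
  then obtain k where k: "Q (Suc k) = Q k"
    using noetherian_ring.ascending_chain_stabilizes[OF noetherian Q] by blast
  have "\<one> \<in> Q k"
  proof (rule ccontr)
    assume "\<one> \<notin> Q k"
    then obtain z where z: "z \<in> carrier R" "z \<notin> Q k" and P: "primeideal (ideal_colon R (Q k) {z}) R"
      using exists_prime_colon[OF noetherian Q] by blast
    let ?P = "ideal_colon R (Q k) {z}"
    have "\<not> m \<subseteq> ?P"
    proof
      assume "m \<subseteq> ?P"
      then have "z \<in> Q (Suc k)"
        unfolding Q_def
        by (intro ideal_colon_ideal_pow_Suc[OF Ann m_ideal z(1)])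
          (auto simp: ideal_colon_def Q_def m_comm)
      then show False using k z(2) by simp
    qed
    then obtain y where y: "y \<in> m" "y \<notin> ?P" by blast
    have yR: "y \<in> carrier R" using y m_subset by blast
    obtain j where "(y [^] (j::nat)) \<odot>\<^bsub>E\<^esub> e = \<zero>\<^bsub>E\<^esub>" using m_nilpotent[OF e y(1)] by blast
    then have "y [^] j \<in> Q k"
      using yR e ideal.Icarr[OF mpow]
      unfolding Q_def ideal_colon_def annihilator_def by (auto simp: smult_commute smult_assoc1)
    then have "y [^] j \<in> ?P" using ideal_colon_self[OF Q z(1)] by blast
    then show False using primeideal.nat_pow_mem_imp_mem[OF P yR] y(2) by blast
  qed
  then have "ideal_pow R m k \<subseteq> ?Ann"
    using ideal.Icarr[OF mpow] unfolding Q_def ideal_colon_def by auto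
  then show ?thesis using e unfolding annihilated_def annihilator_def by blast
qed

section \<open>Endomorphisms of E\<close>

lemma annihilated_insert:
  assumes "J \<subseteq> carrier R" "x \<in> carrier R"
  shows "annihilated E (Idl (insert x J)) = {u \<in> annihilated E J. x \<odot>\<^bsub>E\<^esub> u = \<zero>\<^bsub>E\<^esub>}"
  using annihilated_genideal[of "insert x J"] assms unfolding annihilated_def by auto

lemma smult_annihilated_in_socle:
  assumes x: "x \<in> carrier R" and xm: "\<And>y. y \<in> m \<Longrightarrow> x \<otimes> y \<in> J" and u: "u \<in> annihilated E J"
  shows "\<exists>c\<in>carrier R. x \<odot>\<^bsub>E\<^esub> u = c \<odot>\<^bsub>E\<^esub> e0"
proof (rule annihilated_m_cyclic)
  have uE: "u \<in> carrier E" using u annihilated_subset[of E] by blast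
  have "y \<odot>\<^bsub>E\<^esub> (x \<odot>\<^bsub>E\<^esub> u) = \<zero>\<^bsub>E\<^esub>" if y: "y \<in> m" for y
  proof -
    have "y \<odot>\<^bsub>E\<^esub> (x \<odot>\<^bsub>E\<^esub> u) = (x \<otimes> y) \<odot>\<^bsub>E\<^esub> u"
      using y m_subset x uE by (auto simp: smult_assoc1 smult_commute)
    then show ?thesis using xm[OF y] u unfolding annihilated_def by simp
  qed
  then show "x \<odot>\<^bsub>E\<^esub> u \<in> annihilated E m" unfolding annihilated_def using x uE by simp
qed

text \<open>The inductive step for m-primary J, where x spans a simple submodule of R/J.
  For a witness w with x w = e0, the element \<psi> w is killed by m, hence a multiple b e0;
  every u \<in> (0 :_E J) differs from a multiple c w with x u = c e0 by an element killed by x.\<close>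
lemma vanishing_endo_is_scalar:
  assumes J: "ideal J R" and x: "x \<in> carrier R" "x \<notin> J" and xm: "\<And>y. y \<in> m \<Longrightarrow> x \<otimes> y \<in> J"
    and \<psi>: "linear_on R E E (annihilated E J) \<psi>"
    and vanish: "\<And>u. u \<in> annihilated E J \<Longrightarrow> x \<odot>\<^bsub>E\<^esub> u = \<zero>\<^bsub>E\<^esub> \<Longrightarrow> \<psi> u = \<zero>\<^bsub>E\<^esub>"
  shows "\<exists>b\<in>carrier R. \<forall>u\<in>annihilated E J. \<psi> u = (b \<otimes> x) \<odot>\<^bsub>E\<^esub> u"
proof -
  have JR: "J \<subseteq> carrier R" using ideal.Icarr[OF J] by blast
  obtain w where w: "w \<in> annihilated E J" "x \<odot>\<^bsub>E\<^esub> w = e0" using annihilated_witness[OF J x] by blast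
  have wE: "w \<in> carrier E" using w(1) annihilated_subset[of E] by blast
  have "\<psi> w \<in> annihilated E m"
    unfolding annihilated_def
  proof (intro CollectI conjI ballI)
    show "\<psi> w \<in> carrier E" using linear_on_closed[OF \<psi> w(1)] .
    fix y assume y: "y \<in> m"
    then have yR: "y \<in> carrier R" using m_subset by blast
    have "x \<odot>\<^bsub>E\<^esub> (y \<odot>\<^bsub>E\<^esub> w) = \<zero>\<^bsub>E\<^esub>"
      using smult_commute[OF x(1) yR wE] w(2) smult_e0_eq_zero_iff[OF yR] y by simp
    then have "\<psi> (y \<odot>\<^bsub>E\<^esub> w) = \<zero>\<^bsub>E\<^esub>" using vanish annihilated_smult[OF JR yR w(1)] by blast
    then show "y \<odot>\<^bsub>E\<^esub> \<psi> w = \<zero>\<^bsub>E\<^esub>" using linear_on_smult[OF \<psi> yR w(1)] by simp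
  qed
  then obtain b where b: "b \<in> carrier R" "\<psi> w = b \<odot>\<^bsub>E\<^esub> e0" using annihilated_m_cyclic by blast
  show ?thesis
  proof (intro bexI ballI)
    fix u assume u: "u \<in> annihilated E J"
    have uE: "u \<in> carrier E" using u annihilated_subset[of E] by blast
    obtain c where c: "c \<in> carrier R" "x \<odot>\<^bsub>E\<^esub> u = c \<odot>\<^bsub>E\<^esub> e0"
      using smult_annihilated_in_socle[OF x(1) xm u] by blast
    define u' where "u' = u \<oplus>\<^bsub>E\<^esub> (\<ominus> c) \<odot>\<^bsub>E\<^esub> w"
    have u'J: "u' \<in> annihilated E J"
      unfolding u'_def using annihilated_add[OF JR u annihilated_smult[OF JR _ w(1)]] c(1) by simp
    have "x \<odot>\<^bsub>E\<^esub> u' = c \<odot>\<^bsub>E\<^esub> e0 \<oplus>\<^bsub>E\<^esub> (\<ominus> c) \<odot>\<^bsub>E\<^esub> e0"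
      unfolding u'_def using x(1) uE c wE w(2) by (simp add: smult_r_distr smult_commute[of x "\<ominus> c" w])
    also have "\<dots> = \<zero>\<^bsub>E\<^esub>" using c(1) e0 by (simp add: smult_l_distr[symmetric] R.r_neg)
    finally have \<psi>u': "\<psi> u' = \<zero>\<^bsub>E\<^esub>" using vanish[OF u'J] by simp
    have u_split: "u = u' \<oplus>\<^bsub>E\<^esub> c \<odot>\<^bsub>E\<^esub> w"
      unfolding u'_def using uE c(1) wE
      by (simp add: M.a_assoc smult_l_distr[symmetric] R.l_neg)
    have "\<psi> u = \<psi> u' \<oplus>\<^bsub>E\<^esub> c \<odot>\<^bsub>E\<^esub> \<psi> w"
      using u_split linear_on_add[OF \<psi> u'J annihilated_smult[OF JR c(1) w(1)]]
        linear_on_smult[OF \<psi> c(1) w(1)] by simp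
    also have "\<dots> = b \<odot>\<^bsub>E\<^esub> (c \<odot>\<^bsub>E\<^esub> e0)"
      using \<psi>u' b c(1) e0 by (simp add: smult_commute)
    also have "\<dots> = (b \<otimes> x) \<odot>\<^bsub>E\<^esub> u" using c(2) b(1) x(1) uE by (simp add: smult_assoc1)
    finally show "\<psi> u = (b \<otimes> x) \<odot>\<^bsub>E\<^esub> u" .
  qed (rule b(1))
qed

lemma scalar_endos_step:
  assumes J: "ideal J R" and x: "x \<in> carrier R" "x \<notin> J" and xm: "\<And>y. y \<in> m \<Longrightarrow> x \<otimes> y \<in> J"
    and larger: "scalar_endos R E (annihilated E (Idl (insert x J)))"
  shows "scalar_endos R E (annihilated E J)"
  unfolding scalar_endos_def
proof (intro allI impI)
  fix \<psi> assume \<psi>: "linear_on R E E (annihilated E J) \<psi>"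
  have JR: "J \<subseteq> carrier R" using ideal.Icarr[OF J] by blast
  have "linear_on R E E (annihilated E (Idl (insert x J))) \<psi>"
    using linear_on_subset[OF \<psi>] annihilated_insert[OF JR x(1)] by blast
  then obtain a where a: "a \<in> carrier R" "\<And>u. u \<in> annihilated E (Idl (insert x J)) \<Longrightarrow> \<psi> u = a \<odot>\<^bsub>E\<^esub> u"
    using larger unfolding scalar_endos_def by blast
  let ?\<psi>' = "\<lambda>u. \<psi> u \<ominus>\<^bsub>E\<^esub> a \<odot>\<^bsub>E\<^esub> u"
  have "?\<psi>' u = \<zero>\<^bsub>E\<^esub>" if "u \<in> annihilated E J" "x \<odot>\<^bsub>E\<^esub> u = \<zero>\<^bsub>E\<^esub>" for u
    using a annihilated_insert[OF JR x(1)] that annihilated_subset[of E J] by (auto simp: M.r_neg M.minus_eq)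
  then obtain b where b: "b \<in> carrier R" "\<And>u. u \<in> annihilated E J \<Longrightarrow> ?\<psi>' u = (b \<otimes> x) \<odot>\<^bsub>E\<^esub> u"
    using vanishing_endo_is_scalar[OF J x xm linear_on_minus_smult[OF \<psi> annihilated_subset[of E] a(1)]] by blast
  show "\<exists>c\<in>carrier R. \<forall>u\<in>annihilated E J. \<psi> u = c \<odot>\<^bsub>E\<^esub> u"
  proof (intro bexI ballI)
    fix u assume u: "u \<in> annihilated E J"
    have uE: "u \<in> carrier E" and \<psi>u: "\<psi> u \<in> carrier E" using u annihilated_subset[of E] linear_on_closed[OF \<psi> u] by auto
    have "\<psi> u = ?\<psi>' u \<oplus>\<^bsub>E\<^esub> a \<odot>\<^bsub>E\<^esub> u"
      using \<psi>u uE a(1) by (simp add: M.minus_eq M.a_assoc M.l_neg)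
    then show "\<psi> u = (a \<oplus> b \<otimes> x) \<odot>\<^bsub>E\<^esub> u"
      using b(2)[OF u] a(1) b(1) x(1) uE by (simp add: smult_l_distr M.a_comm)
  qed (use a(1) b(1) x(1) in simp)
qed

lemma scalar_endos_trivial: "scalar_endos R E (annihilated E (carrier R))"
  unfolding scalar_endos_def
proof (intro allI impI bexI ballI)
  fix \<psi> u assume \<psi>: "linear_on R E E (annihilated E (carrier R)) \<psi>"
    and u: "u \<in> annihilated E (carrier R)"
  have "u \<in> carrier E" "\<one> \<odot>\<^bsub>E\<^esub> u = \<zero>\<^bsub>E\<^esub>" using u unfolding annihilated_def by auto
  then have zero: "u = \<zero>\<^bsub>E\<^esub>" by simp
  have "\<psi> (\<zero> \<odot>\<^bsub>E\<^esub> u) = \<zero> \<odot>\<^bsub>E\<^esub> \<psi> u" using linear_on_smult[OF \<psi> R.zero_closed u] .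
  then show "\<psi> u = \<zero> \<odot>\<^bsub>E\<^esub> u" using zero linear_on_closed[OF \<psi> u] by simp
qed (rule R.zero_closed)

lemma exists_socle_element_mod:
  assumes K: "ideal K R" "\<one> \<notin> K" and n: "ideal_pow R m n \<subseteq> K"
  obtains x where "x \<in> carrier R" "x \<notin> K" "\<And>y. y \<in> m \<Longrightarrow> x \<otimes> y \<in> K"
proof -
  define t where "t = (LEAST t. ideal_pow R m t \<subseteq> K)"
  have t: "ideal_pow R m t \<subseteq> K" unfolding t_def using n by (rule LeastI)
  have "t \<noteq> 0"
  proof
    assume "t = 0"
    then show False using t K(2) by auto
  qed
  then obtain s where s: "t = Suc s" using not0_implies_Suc by blast
  have "\<not> ideal_pow R m s \<subseteq> K"
  proof
    assume "ideal_pow R m s \<subseteq> K"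
    then have "t \<le> s" unfolding t_def by (rule Least_le)
    then show False using s by simp
  qed
  then obtain x where x: "x \<in> ideal_pow R m s" "x \<notin> K" by blast
  have "x \<in> carrier R" using x(1) ideal.Icarr[OF ideal_pow_ideal[OF is_cring m_ideal]] by blast
  moreover have "x \<otimes> y \<in> K" if "y \<in> m" for y
    using ideal_prod.prod[OF x(1) that] t s by auto
  ultimately show ?thesis using that x(2) by blast
qed

lemma scalar_endos_m_primary:
  assumes J: "ideal J R" and n: "ideal_pow R m n \<subseteq> J"
  shows "scalar_endos R E (annihilated E J)"
proof (rule ccontr)
  assume not_scalar: "\<not> ?thesis"
  define F where "F = {K. ideal K R \<and> (\<exists>n. ideal_pow R m n \<subseteq> K) \<and> \<not> scalar_endos R E (annihilated E K)}"
  have "J \<in> F" unfolding F_def using J n not_scalar by blast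
  then have "\<exists>K\<in>F. \<forall>K'\<in>F. K \<subseteq> K' \<longrightarrow> K' = K"
    by (intro noetherian_ring.ideal_family_maximal[OF noetherian]) (auto simp: F_def)
  then obtain K where "K \<in> F" and Kmax: "\<And>K'. K' \<in> F \<Longrightarrow> K \<subseteq> K' \<Longrightarrow> K' = K"
    by blast
  then obtain k where K: "ideal K R" "ideal_pow R m k \<subseteq> K" "\<not> scalar_endos R E (annihilated E K)"
    unfolding F_def by blast
  have KR: "K \<subseteq> carrier R" using ideal.Icarr[OF K(1)] by blast
  have "\<one> \<notin> K" using K(3) ideal.one_imp_carrier[OF K(1)] scalar_endos_trivial by auto
  then obtain x where x: "x \<in> carrier R" "x \<notin> K" and xm: "\<And>y. y \<in> m \<Longrightarrow> x \<otimes> y \<in> K"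
    using exists_socle_element_mod[OF K(1) _ K(2)] by blast
  let ?K' = "Idl (insert x K)"
  have K'_sup: "K \<subseteq> ?K'" "x \<in> ?K'" using genideal_self[of "insert x K"] KR x(1) by auto
  have "?K' \<notin> F" using Kmax K'_sup x(2) by blast
  moreover have "ideal ?K' R" using genideal_ideal[of "insert x K"] KR x(1) by simp
  ultimately have "scalar_endos R E (annihilated E ?K')" using K(2) K'_sup unfolding F_def by blast
  then show False using scalar_endos_step[OF K(1) x xm] K(3) by blast
qed

lemma scalars_agree_imp_diff_in_m_power:
  assumes a: "a \<in> carrier R" and b: "b \<in> carrier R"
    and ab: "\<And>u. u \<in> annihilated E (ideal_pow R m k) \<Longrightarrow> a \<odot>\<^bsub>E\<^esub> u = b \<odot>\<^bsub>E\<^esub> u"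
  shows "a \<ominus> b \<in> ideal_pow R m k"
proof -
  have "a \<ominus> b \<in> annihilator R E (annihilated E (ideal_pow R m k))"
    using ab a b smult_minus_eq_zero_iff unfolding annihilator_def annihilated_def by auto
  then show ?thesis using annihilator_annihilated[OF ideal_pow_ideal[OF is_cring m_ideal]] by simp
qed

lemma annihilated_m_power_mono:
  "k \<le> n \<Longrightarrow> annihilated E (ideal_pow R m k) \<subseteq> annihilated E (ideal_pow R m n)"
  using ideal_pow_antimono[OF is_cring m_ideal] unfolding annihilated_def by blast

lemma endomorphism_layer_scalars:
  assumes \<psi>: "linear_on R E E (carrier E) \<psi>"
  obtains A where "\<And>n. A n \<in> carrier R"
    "\<And>n u. u \<in> annihilated E (ideal_pow R m n) \<Longrightarrow> \<psi> u = A n \<odot>\<^bsub>E\<^esub> u"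
proof -
  have "\<forall>n. \<exists>a. a \<in> carrier R \<and> (\<forall>u\<in>annihilated E (ideal_pow R m n). \<psi> u = a \<odot>\<^bsub>E\<^esub> u)"
  proof
    fix n
    have "linear_on R E E (annihilated E (ideal_pow R m n)) \<psi>"
      using linear_on_subset[OF \<psi> annihilated_subset[of E]] .
    then show "\<exists>a. a \<in> carrier R \<and> (\<forall>u\<in>annihilated E (ideal_pow R m n). \<psi> u = a \<odot>\<^bsub>E\<^esub> u)"
      using scalar_endos_m_primary[OF ideal_pow_ideal[OF is_cring m_ideal] subset_refl]
      unfolding scalar_endos_def by blast
  qed
  from choice[OF this] obtain A
    where A: "\<forall>n. A n \<in> carrier R \<and> (\<forall>u\<in>annihilated E (ideal_pow R m n). \<psi> u = A n \<odot>\<^bsub>E\<^esub> u)"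
    by blast
  show ?thesis by (rule that[of A]) (use A in blast)+
qed

text \<open>Matlis duality in the form Hom_R(E, E) = R for complete R: the scalars that
  represent an endomorphism on the layers (0 :_E m^n) form an m-adic Cauchy sequence,
  whose limit represents it on all of E since E is m-power torsion.\<close>
lemma endomorphism_is_scalar:
  assumes complete: "madic_complete R m" and \<psi>: "linear_on R E E (carrier E) \<psi>"
  shows "\<exists>a\<in>carrier R. \<forall>u\<in>carrier E. \<psi> u = a \<odot>\<^bsub>E\<^esub> u"
proof -
  obtain A where A: "\<And>n. A n \<in> carrier R"
    and A\<psi>: "\<And>n u. u \<in> annihilated E (ideal_pow R m n) \<Longrightarrow> \<psi> u = A n \<odot>\<^bsub>E\<^esub> u"
    using endomorphism_layer_scalars[OF \<psi>] by blast
  have diff: "A n \<ominus> A n' \<in> ideal_pow R m k" if "k \<le> n" "k \<le> n'" for k n n'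
  proof (rule scalars_agree_imp_diff_in_m_power[OF A A])
    fix u assume "u \<in> annihilated E (ideal_pow R m k)"
    then have "\<psi> u = A n \<odot>\<^bsub>E\<^esub> u" "\<psi> u = A n' \<odot>\<^bsub>E\<^esub> u"
      using A\<psi> subsetD[OF annihilated_m_power_mono[OF that(1)]] subsetD[OF annihilated_m_power_mono[OF that(2)]] by blast+
    then show "A n \<odot>\<^bsub>E\<^esub> u = A n' \<odot>\<^bsub>E\<^esub> u" by simp
  qed
  have "\<forall>k. \<exists>N. \<forall>n n'. N \<le> n \<and> N \<le> n' \<longrightarrow> A n \<ominus> A n' \<in> ideal_pow R m k"
    using diff by blast
  then have "\<exists>a\<in>carrier R. \<forall>k. \<exists>N. \<forall>n. N \<le> n \<longrightarrow> A n \<ominus> a \<in> ideal_pow R m k"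
    using A by (intro complete[unfolded madic_complete_def, rule_format]) blast
  then obtain a where a: "a \<in> carrier R"
    and conv: "\<And>k. \<exists>N. \<forall>n. N \<le> n \<longrightarrow> A n \<ominus> a \<in> ideal_pow R m k"
    by blast
  show ?thesis
  proof (intro bexI ballI)
    fix u assume u: "u \<in> carrier E"
    obtain k where k: "u \<in> annihilated E (ideal_pow R m k)" using m_power_torsion[OF u] by blast
    obtain N where N: "\<And>n. N \<le> n \<Longrightarrow> A n \<ominus> a \<in> ideal_pow R m k" using conv by blast
    let ?n = "max N k"
    have "(A ?n \<ominus> a) \<odot>\<^bsub>E\<^esub> u = \<zero>\<^bsub>E\<^esub>" using N[of ?n] k unfolding annihilated_def by simp
    then have "A ?n \<odot>\<^bsub>E\<^esub> u = a \<odot>\<^bsub>E\<^esub> u" using smult_minus_eq_zero_iff[OF A a u] by simp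
    moreover have "\<psi> u = A ?n \<odot>\<^bsub>E\<^esub> u" using A\<psi> subsetD[OF annihilated_m_power_mono[of k ?n] k] by simp
    ultimately show "\<psi> u = a \<odot>\<^bsub>E\<^esub> u" by simp
  qed (rule a)
qed

section \<open>Vanishing of pure tensors\<close>

lemma relation_killing_hom_bilinear:
  assumes L: "module R L"
    and h: "linear_on R (fun_module R) E (carrier (fun_module R)) h"
    and hK: "\<forall>F\<in>tensor_relations R L E. h F = \<zero>\<^bsub>E\<^esub>"
  shows "\<And>x y u. x \<in> carrier L \<Longrightarrow> y \<in> carrier L \<Longrightarrow> u \<in> carrier E \<Longrightarrow>
      h (fdelta R (x \<oplus>\<^bsub>L\<^esub> y, u)) = h (fdelta R (x, u)) \<oplus>\<^bsub>E\<^esub> h (fdelta R (y, u))"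
    and "\<And>x u v. x \<in> carrier L \<Longrightarrow> u \<in> carrier E \<Longrightarrow> v \<in> carrier E \<Longrightarrow>
      h (fdelta R (x, u \<oplus>\<^bsub>E\<^esub> v)) = h (fdelta R (x, u)) \<oplus>\<^bsub>E\<^esub> h (fdelta R (x, v))"
    and "\<And>r x u. r \<in> carrier R \<Longrightarrow> x \<in> carrier L \<Longrightarrow> u \<in> carrier E \<Longrightarrow>
      h (fdelta R (r \<odot>\<^bsub>L\<^esub> x, u)) = r \<odot>\<^bsub>E\<^esub> h (fdelta R (x, u))"
    and "\<And>r x u. r \<in> carrier R \<Longrightarrow> x \<in> carrier L \<Longrightarrow> u \<in> carrier E \<Longrightarrow>
      h (fdelta R (x, r \<odot>\<^bsub>E\<^esub> u)) = r \<odot>\<^bsub>E\<^esub> h (fdelta R (x, u))"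
proof -
  have hE: "h F \<in> carrier E" if "F \<in> carrier (fun_module R)" for F
    using linear_on_closed[OF h that] .
  have h_sub: "h (fsub R F G) = h F \<ominus>\<^bsub>E\<^esub> h G"
    if "F \<in> carrier (fun_module R)" "G \<in> carrier (fun_module R)" for F G
    using linear_on_minus[OF fun_module_module h that] fun_module_minus[OF that] by simp
  have h_eq_of_relation: "h F = h G" if "fsub R F G \<in> tensor_relations R L E"
    "F \<in> carrier (fun_module R)" "G \<in> carrier (fun_module R)" for F G
  proof -
    have "h F \<ominus>\<^bsub>E\<^esub> h G = \<zero>\<^bsub>E\<^esub>" using hK that(1) h_sub[OF that(2,3)] by simp
    then show ?thesis using hE[OF that(2)] hE[OF that(3)] M.minus_eq_zero_iff by simp
  qed
  have h_sum_of_relation: "h F = h G \<oplus>\<^bsub>E\<^esub> h H" if "fsub R (fsub R F G) H \<in> tensor_relations R L E"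
    "F \<in> carrier (fun_module R)" "G \<in> carrier (fun_module R)" "H \<in> carrier (fun_module R)" for F G H
  proof -
    have "(h F \<ominus>\<^bsub>E\<^esub> h G) \<ominus>\<^bsub>E\<^esub> h H = \<zero>\<^bsub>E\<^esub>"
      using hK that(1) h_sub[OF fsub_carrier[OF that(2,3)] that(4)] h_sub[OF that(2,3)] by simp
    then have "h F \<ominus>\<^bsub>E\<^esub> h G = h H" using hE that(2-4) M.minus_eq_zero_iff by simp
    moreover have "h F = (h F \<ominus>\<^bsub>E\<^esub> h G) \<oplus>\<^bsub>E\<^esub> h G"
      using hE that(2,3) by (simp add: M.minus_eq M.a_assoc M.l_neg)
    ultimately show ?thesis using hE that(3,4) by (simp add: M.a_comm)
  qed
  have h_fsmult: "h (fsmult R r F) = r \<odot>\<^bsub>E\<^esub> h F" if "r \<in> carrier R" "F \<in> carrier (fun_module R)" for r F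
    using linear_on_smult[OF h that] by simp
  show "h (fdelta R (x \<oplus>\<^bsub>L\<^esub> y, u)) = h (fdelta R (x, u)) \<oplus>\<^bsub>E\<^esub> h (fdelta R (y, u))"
    if "x \<in> carrier L" "y \<in> carrier L" "u \<in> carrier E" for x y u
    by (rule h_sum_of_relation[OF tensor_relations.add_left[OF that]]) simp_all
  show "h (fdelta R (x, u \<oplus>\<^bsub>E\<^esub> v)) = h (fdelta R (x, u)) \<oplus>\<^bsub>E\<^esub> h (fdelta R (x, v))"
    if "x \<in> carrier L" "u \<in> carrier E" "v \<in> carrier E" for x u v
    by (rule h_sum_of_relation[OF tensor_relations.add_right[OF that]]) simp_all
  show "h (fdelta R (r \<odot>\<^bsub>L\<^esub> x, u)) = r \<odot>\<^bsub>E\<^esub> h (fdelta R (x, u))"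
    if "r \<in> carrier R" "x \<in> carrier L" "u \<in> carrier E" for r x u
    using h_eq_of_relation[OF tensor_relations.smult_left[OF that]] that(1) h_fsmult by simp
  show "h (fdelta R (x, r \<odot>\<^bsub>E\<^esub> u)) = r \<odot>\<^bsub>E\<^esub> h (fdelta R (x, u))"
    if "r \<in> carrier R" "x \<in> carrier L" "u \<in> carrier E" for r x u
    using h_eq_of_relation[OF tensor_relations.smult_right[OF that]] that(1) h_fsmult by simp
qed

text \<open>Over a complete R each slice v \<mapsto> h(y \<otimes> v) is an endomorphism of E, hence
  multiplication by a scalar g y; bilinearity of h makes g a functional on L.\<close>
lemma functional_of_relation_killing_hom:
  assumes complete: "madic_complete R m" and L: "module R L"
    and h: "linear_on R (fun_module R) E (carrier (fun_module R)) h"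
    and hK: "\<forall>F\<in>tensor_relations R L E. h F = \<zero>\<^bsub>E\<^esub>"
  obtains g where "g \<in> lin_functionals R L"
    "\<And>y v. y \<in> carrier L \<Longrightarrow> v \<in> carrier E \<Longrightarrow> h (fdelta R (y, v)) = g y \<odot>\<^bsub>E\<^esub> v"
proof -
  interpret L: module R L by (rule L)
  note bilinear = relation_killing_hom_bilinear[OF L h hK]
  have "\<exists>a\<in>carrier R. \<forall>v\<in>carrier E. h (fdelta R (y, v)) = a \<odot>\<^bsub>E\<^esub> v" if y: "y \<in> carrier L" for y
  proof (rule endomorphism_is_scalar[OF complete])
    show "linear_on R E E (carrier E) (\<lambda>v. h (fdelta R (y, v)))"
      unfolding linear_on_def
      using linear_on_closed[OF h fdelta_carrier] bilinear(2)[OF y] bilinear(4)[OF _ y] by blast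
  qed
  then obtain g where g: "\<And>y. y \<in> carrier L \<Longrightarrow> g y \<in> carrier R"
    and gh: "\<And>y v. y \<in> carrier L \<Longrightarrow> v \<in> carrier E \<Longrightarrow> h (fdelta R (y, v)) = g y \<odot>\<^bsub>E\<^esub> v"
    by metis
  have "g \<in> lin_functionals R L"
    unfolding lin_functionals_def
  proof (intro CollectI conjI ballI)
    fix x y assume x: "x \<in> carrier L" and y: "y \<in> carrier L"
    show "g (x \<oplus>\<^bsub>L\<^esub> y) = g x \<oplus> g y"
    proof (rule smult_eq_imp_scalar_eq)
      fix v assume v: "v \<in> carrier E"
      show "g (x \<oplus>\<^bsub>L\<^esub> y) \<odot>\<^bsub>E\<^esub> v = (g x \<oplus> g y) \<odot>\<^bsub>E\<^esub> v"
        using bilinear(1)[OF x y v] gh x y v g by (simp add: smult_l_distr)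
    qed (use g x y in simp_all)
  next
    fix r x assume r: "r \<in> carrier R" and x: "x \<in> carrier L"
    show "g (r \<odot>\<^bsub>L\<^esub> x) = r \<otimes> g x"
    proof (rule smult_eq_imp_scalar_eq)
      fix v assume v: "v \<in> carrier E"
      show "g (r \<odot>\<^bsub>L\<^esub> x) \<odot>\<^bsub>E\<^esub> v = (r \<otimes> g x) \<odot>\<^bsub>E\<^esub> v"
        using bilinear(3)[OF r x v] gh x r v g by (simp add: smult_assoc1)
    qed (use g x r in simp_all)
  qed (rule g)
  then show ?thesis using that gh by blast
qed

lemma smult_zero_imp_tensor_zero:
  assumes complete: "madic_complete R m" and L: "module R L"
    and s: "s \<in> carrier L" and u: "u \<in> carrier E"
    and zero: "\<And>g. g \<in> lin_functionals R L \<Longrightarrow> g s \<odot>\<^bsub>E\<^esub> u = \<zero>\<^bsub>E\<^esub>"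
  shows "tensor_zero R L E s u"
proof (rule ccontr)
  assume "\<not> tensor_zero R L E s u"
  then have "fdelta R (s, u) \<notin> tensor_relations R L E" unfolding tensor_zero_def .
  then obtain h where h: "linear_on R (fun_module R) E (carrier (fun_module R)) h"
    and hK: "\<forall>F\<in>tensor_relations R L E. h F = \<zero>\<^bsub>E\<^esub>" and hsu: "h (fdelta R (s, u)) = e0"
    using separating_hom[OF fun_module_module tensor_relations_submodule fdelta_carrier] by blast
  obtain g where "g \<in> lin_functionals R L" "h (fdelta R (s, u)) = g s \<odot>\<^bsub>E\<^esub> u"
    using functional_of_relation_killing_hom[OF complete L h hK] s u by metis
  then show False using zero hsu e0_nonzero by simp
qed

lemma tensor_zero_iff:
  assumes complete: "madic_complete R m" and L: "module R L"
    and s: "s \<in> carrier L" and u: "u \<in> carrier E"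
  shows "tensor_zero R L E s u \<longleftrightarrow> (\<forall>g\<in>lin_functionals R L. g s \<odot>\<^bsub>E\<^esub> u = \<zero>\<^bsub>E\<^esub>)"
proof
  assume "tensor_zero R L E s u"
  then show "\<forall>g\<in>lin_functionals R L. g s \<odot>\<^bsub>E\<^esub> u = \<zero>\<^bsub>E\<^esub>"
    using functional_pairing.tensor_zero_imp_smult_zero[OF functional_pairing.intro[OF module_axioms L]] s u
    by (metis functional_pairing_axioms.intro)
qed (rule smult_zero_imp_tensor_zero[OF complete L s u], blast)

lemma trace_ideal_ideal:
  assumes "S \<subseteq> carrier L" shows "ideal (trace_ideal R S L) R"
  unfolding trace_ideal_def
  by (rule genideal_ideal) (use assms in \<open>auto simp: lin_functionals_def\<close>)

lemma zero_closure_eq_annihilated_trace: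
  assumes complete: "madic_complete R m" and L: "module R L" and S: "S \<subseteq> carrier L"
  shows "zero_closure R S L E = annihilated E (trace_ideal R S L)"
proof -
  let ?G = "{g s | g s. g \<in> lin_functionals R L \<and> s \<in> S}"
  have "?G \<subseteq> carrier R" using S unfolding lin_functionals_def by blast
  then have "annihilated E (trace_ideal R S L) = annihilated E ?G"
    unfolding trace_ideal_def by (rule annihilated_genideal)
  also have "\<dots> = zero_closure R S L E"
  proof (rule equalityI; rule subsetI)
    fix u assume "u \<in> annihilated E ?G"
    then have u: "u \<in> carrier E"
      and Gu: "\<And>g s. g \<in> lin_functionals R L \<Longrightarrow> s \<in> S \<Longrightarrow> g s \<odot>\<^bsub>E\<^esub> u = \<zero>\<^bsub>E\<^esub>"
      unfolding annihilated_def by blast+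
    have "tensor_zero R L E s u" if "s \<in> S" for s
      using tensor_zero_iff[OF complete L _ u] Gu that S by blast
    then show "u \<in> zero_closure R S L E" unfolding zero_closure_def using u by blast
  next
    fix u assume "u \<in> zero_closure R S L E"
    then have u: "u \<in> carrier E" and tz: "\<And>s. s \<in> S \<Longrightarrow> tensor_zero R L E s u"
      unfolding zero_closure_def by blast+
    have "j \<odot>\<^bsub>E\<^esub> u = \<zero>\<^bsub>E\<^esub>" if "j \<in> ?G" for j
      using that tensor_zero_iff[OF complete L _ u] tz S by blast
    then show "u \<in> annihilated E ?G" unfolding annihilated_def using u by blast
  qed
  finally show ?thesis by simp
qed

end

theorem theorem7p19:
  fixes R :: "('a, 'b) ring_scheme" and m :: "'a set"
    and L :: "('a, 'l) module" and S :: "'l set"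
    and E :: "('a, 'e) module"
  assumes "noetherian_ring R"
    and "local_ring R m"
    and "madic_complete R m"
    and "is_injective_hull_residue_field R m E"
    and "module R L"
    and "S \<subseteq> carrier L"
  shows "trace_ideal R S L = annihilator R E (zero_closure R S L E)"
proof -
  obtain e0 where "residue_field_hull R E m e0"
    using assms(1,2,4) unfolding is_injective_hull_residue_field_def
    by (metis baer_module.intro baer_module_axioms.intro residue_field_hull.intro
        residue_field_hull_axioms.intro)
  then interpret residue_field_hull R E m e0 .
  show ?thesis
    using annihilator_annihilated[OF trace_ideal_ideal[OF assms(6)]]
      zero_closure_eq_annihilated_trace[OF assms(3,5,6)] by simp
qed

end
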